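(* Let $G$ be a triangular graph and run the procedure described in the context on $G$, starting with two vertices of the outer triangle as the distinguished vertices $v_1,v_2$ (clockwise consecutive, with the edge $v_1v_2$ given some orientation). Let $L$ be the constructed orientation restricted to the interior edges of $G$ (an internal $3$-orientation) and let $(T_r,T_g,T_b)$ be the realizer of $G$ corresponding to $L$. Then the set of edges that received strength $2$ is exactly one of the sets $T_r$, $T_g$, $T_b$ (with orientations ignored).
   Context: A triangular graph is a plane graph with at least 3 vertices all of whose faces, including the outer one, are triangles; interior vertices/edges are those not on the outer triangle. An internal 3-orientation is an orientation of the interior edges in which every interior vertex has in-degree exactly 3. A realizer of $G$ is a triple $(T_r,T_g,T_b)$ of sets of oriented edges which, ignoring orientations, partition the interior edges of $G$, such that every interior vertex $v$ has in-degree exactly one in each of $T_r,T_g,T_b$, and the counterclockwise order of edges around $v$ is: incoming edge of $T_r$, outgoing edges of $T_b$, incoming edge of $T_g$, outgoing edges of $T_r$, incoming edge of $T_b$, outgoing edges of $T_g$. Every internal 3-orientation is the orientation induced by exactly one realizer (its corresponding realizer). A near triangulation is a 2-connected plane graph whose outer face is bounded by a cycle (the outer cycle) and whose inner faces are triangles. The procedure: its input is a near triangulation $H$ with distinguished vertices $v_1,v_2$, $v_2$ immediately following $v_1$ clockwise on the outer cycle; edge $v_1v_2$ is already oriented, other edges are not. It orients every edge and gives it strength 1 or 2. (Recursive step) If the outer cycle has a chord $v_av_b$, it splits the outer cycle into cycles $C_1$ (containing $v_1,v_2$) and $C_2$; let $H_1,H_2$ be the subgraphs formed by $C_1,C_2$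 with their interiors. Run the procedure first on $H_1$ with distinguished vertices $v_1,v_2$, then on $H_2$ with the chord endpoints as distinguished vertices, ordered so that the second immediately follows the first clockwise on the outer cycle of $H_2$. (Orienting step) If the outer cycle has no chord, let $v_3$ be the vertex immediately following $v_2$ clockwise on the outer cycle. Edges of the current graph incident to $v_3$ lying on the outer cycle are oriented towards $v_3$ with strength 1; all other edges of the current graph incident to $v_3$ are oriented away from $v_3$ with strength 2. Then $v_3$ is deleted, and if vertices other than $v_1,v_2$ remain, the procedure is called recursively on the remaining graph with the same $v_1,v_2$. *)

theory Defs
  imports Main
begin

text \<open>A plane graph is given by a finite vertex set V, a symmetric irreflexive
  adjacency relation E, and a rotation system rot: for each vertex v,
  rot v u is the neighbour of v that follows u in COUNTERCLOCKWISE order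
  around v.  The face to the right of the dart (u,v) continues with the dart
  (v, rot v u); inner faces are traversed clockwise, the outer face
  counterclockwise.\<close>

definition nbrs :: "('v \<Rightarrow> 'v \<Rightarrow> bool) \<Rightarrow> 'v \<Rightarrow> 'v set" where
  "nbrs E v = {u. E v u}"

definition deg :: "('v \<Rightarrow> 'v \<Rightarrow> bool) \<Rightarrow> 'v \<Rightarrow> nat" where
  "deg E v = card (nbrs E v)"

definition ccw_list :: "('v \<Rightarrow> 'v \<Rightarrow> bool) \<Rightarrow> ('v \<Rightarrow> 'v \<Rightarrow> 'v) \<Rightarrow> 'v \<Rightarrow> 'v \<Rightarrow> 'v list" where
  "ccw_list E rot v u = map (\<lambda>i. (rot v ^^ i) u) [0..<deg E v]"

definition undirected_edges :: "('v \<Rightarrow> 'v \<Rightarrow> bool) \<Rightarrow> 'v set set" where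
  "undirected_edges E = {{u, v} | u v. E u v}"

definition rotation_system :: "'v set \<Rightarrow> ('v \<Rightarrow> 'v \<Rightarrow> bool) \<Rightarrow> ('v \<Rightarrow> 'v \<Rightarrow> 'v) \<Rightarrow> bool" where
  "rotation_system V E rot \<longleftrightarrow>
     (\<forall>v\<in>V. bij_betw (rot v) (nbrs E v) (nbrs E v) \<and>
             (\<forall>u\<in>nbrs E v. nbrs E v = range (\<lambda>i. (rot v ^^ i) u)))"

text \<open>Triangular graph: a simple connected graph on at least 3 vertices with a
  rotation system all of whose faces are triangles and which satisfies
  Euler's formula for the sphere (for triangulated surfaces: |E| = 3|V| - 6).
  Such rotation systems are exactly the plane triangulations (up to the
  choice of the outer face, which is fixed separately).\<close>
definition triangular_graph :: "'v set \<Rightarrow> ('v \<Rightarrow> 'v \<Rightarrow> bool) \<Rightarrow> ('v \<Rightarrow> 'v \<Rightarrow> 'v) \<Rightarrow> bool" where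
  "triangular_graph V E rot \<longleftrightarrow>
     finite V \<and> card V \<ge> 3 \<and>
     (\<forall>u v. E u v \<longrightarrow> u \<in> V \<and> v \<in> V) \<and>
     (\<forall>u v. E u v \<longrightarrow> E v u) \<and> (\<forall>u. \<not> E u u) \<and>
     (\<forall>u\<in>V. \<forall>v\<in>V. E\<^sup>*\<^sup>* u v) \<and>
     rotation_system V E rot \<and>
     (\<forall>u v. E u v \<longrightarrow> (let w = rot v u in rot w v = u \<and> rot u w = v)) \<and>
     card (undirected_edges E) = 3 * card V - 6"

text \<open>(o1,o2,o3) is the outer face, with o1, o2, o3 in CLOCKWISE order along the
  outer cycle (i.e. the right face of the dart (o1,o3) is the outer face).\<close>
definition outer_face_cw :: "('v \<Rightarrow> 'v \<Rightarrow> bool) \<Rightarrow> ('v \<Rightarrow> 'v \<Rightarrow> 'v) \<Rightarrow> 'v \<Rightarrow> 'v \<Rightarrow> 'v \<Rightarrow> bool" where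
  "outer_face_cw E rot o1 o2 o3 \<longleftrightarrow>
     E o1 o2 \<and> E o2 o3 \<and> E o3 o1 \<and>
     rot o3 o1 = o2 \<and> rot o2 o3 = o1 \<and> rot o1 o2 = o3"

definition interior_edge :: "('v \<Rightarrow> 'v \<Rightarrow> bool) \<Rightarrow> 'v \<Rightarrow> 'v \<Rightarrow> 'v \<Rightarrow> 'v \<Rightarrow> 'v \<Rightarrow> bool" where
  "interior_edge E o1 o2 o3 u v \<longleftrightarrow> E u v \<and> \<not> {u, v} \<subseteq> {o1, o2, o3}"

definition realizer ::
  "'v set \<Rightarrow> ('v \<Rightarrow> 'v \<Rightarrow> bool) \<Rightarrow> ('v \<Rightarrow> 'v \<Rightarrow> 'v) \<Rightarrow> 'v \<Rightarrow> 'v \<Rightarrow> 'v \<Rightarrow>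
   ('v \<times> 'v) set \<Rightarrow> ('v \<times> 'v) set \<Rightarrow> ('v \<times> 'v) set \<Rightarrow> bool" where
  "realizer V E rot o1 o2 o3 Tr Tg Tb \<longleftrightarrow>
     (\<forall>(u, v) \<in> Tr \<union> Tg \<union> Tb. interior_edge E o1 o2 o3 u v) \<and>
     (\<forall>u v. interior_edge E o1 o2 o3 u v \<longrightarrow>
        length (filter id [(u,v) \<in> Tr, (v,u) \<in> Tr, (u,v) \<in> Tg, (v,u) \<in> Tg,
                           (u,v) \<in> Tb, (v,u) \<in> Tb]) = 1) \<and>
     (\<forall>v \<in> V - {o1, o2, o3}.
        card {u. (u, v) \<in> Tr} = 1 \<and> card {u. (u, v) \<in> Tg} = 1 \<and> card {u. (u, v) \<in> Tb} = 1 \<and>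
        (\<exists>r g b Bs Rs Gs.
           (r, v) \<in> Tr \<and> (g, v) \<in> Tg \<and> (b, v) \<in> Tb \<and>
           (\<forall>x \<in> set Bs. (v, x) \<in> Tb) \<and> (\<forall>x \<in> set Rs. (v, x) \<in> Tr) \<and>
           (\<forall>x \<in> set Gs. (v, x) \<in> Tg) \<and>
           ccw_list E rot v r = r # Bs @ g # Rs @ b # Gs))"

text \<open>The current near triangulation H is represented by its vertex set S (it is
  the subgraph of G induced by S) together with its outer cycle C, listed in
  CLOCKWISE order starting with the distinguished vertices v1, v2.
  The result R is a set of triples (x, y, k): the edge xy is oriented from x
  to y and has strength k.  R covers all edges of H except v1v2 (which is
  already oriented when the procedure is called).\<close>

definition has_chord :: "('v \<Rightarrow> 'v \<Rightarrow> bool) \<Rightarrow> 'v list \<Rightarrow> bool" where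
  "has_chord E C \<longleftrightarrow>
     (\<exists>i j. Suc i < j \<and> j < length C \<and> \<not> (i = 0 \<and> j = length C - 1) \<and> E (C ! i) (C ! j))"

definition next_after_v3 :: "'v list \<Rightarrow> 'v" where
  "next_after_v3 C = (if drop 3 C = [] then C ! 0 else C ! 3)"

definition orient_labels :: "('v \<Rightarrow> 'v \<Rightarrow> bool) \<Rightarrow> 'v set \<Rightarrow> 'v list \<Rightarrow> ('v \<times> 'v \<times> nat) set" where
  "orient_labels E S C =
     {(u, C ! 2, 1) | u. u \<in> S \<and> E (C ! 2) u \<and> (u = C ! 1 \<or> u = next_after_v3 C)} \<union>
     {(C ! 2, u, 2) | u. u \<in> S \<and> E (C ! 2) u \<and> u \<noteq> C ! 1 \<and> u \<noteq> next_after_v3 C}"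

text \<open>Outer cycle after deleting v3 = C!2: the path v2 v3 c replaced by v2, the
  inner neighbours of v3 (counterclockwise around v3 from v2), c.\<close>
definition cycle_after_delete :: "('v \<Rightarrow> 'v \<Rightarrow> bool) \<Rightarrow> ('v \<Rightarrow> 'v \<Rightarrow> 'v) \<Rightarrow> 'v list \<Rightarrow> 'v list" where
  "cycle_after_delete E rot C =
     C ! 0 # C ! 1 #
     takeWhile (\<lambda>w. w \<noteq> next_after_v3 C) (tl (ccw_list E rot (C ! 2) (C ! 1))) @ drop 3 C"

inductive proc :: "('v \<Rightarrow> 'v \<Rightarrow> bool) \<Rightarrow> ('v \<Rightarrow> 'v \<Rightarrow> 'v) \<Rightarrow> 'v set \<Rightarrow> 'v list \<Rightarrow> ('v \<times> 'v \<times> nat) set \<Rightarrow> bool"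
  for E rot where
  split:
  "\<lbrakk> Suc i < j; j < length C; \<not> (i = 0 \<and> j = length C - 1); E (C ! i) (C ! j);
     C1 = (if i = 0 then take (Suc j) C else take (Suc i) C @ drop j C);
     C2 = (if i = 0 then C ! 0 # drop j C else C ! j # take (j - i) (drop i C));
     S1 \<union> S2 = S; S1 \<inter> S2 = {C ! i, C ! j}; set C1 \<subseteq> S1; set C2 \<subseteq> S2;
     \<forall>x \<in> S1 - {C ! i, C ! j}. \<forall>y \<in> S2 - {C ! i, C ! j}. \<not> E x y;
     proc E rot S1 C1 R1; proc E rot S2 C2 R2 \<rbrakk>
   \<Longrightarrow> proc E rot S C (R1 \<union> R2)"
| orient_stop:
  "\<lbrakk> length C \<ge> 3; \<not> has_chord E C; S - {C ! 2} = {C ! 0, C ! 1} \<rbrakk>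
   \<Longrightarrow> proc E rot S C (orient_labels E S C)"
| orient_rec:
  "\<lbrakk> length C \<ge> 3; \<not> has_chord E C; S - {C ! 2} \<noteq> {C ! 0, C ! 1};
     proc E rot (S - {C ! 2}) (cycle_after_delete E rot C) R' \<rbrakk>
   \<Longrightarrow> proc E rot S C (orient_labels E S C \<union> R')"

end

theory Submission
  imports Defs
begin

lemma bij_orbit_period:
  assumes fin: "finite N" and bij: "bij_betw f N N" and orb: "N = range (\<lambda>i. (f ^^ i) a)"
  shows "inj_on (\<lambda>i. (f ^^ i) a) {0..<card N}" and "(f ^^ card N) a = a"
proof -
  let ?g = "\<lambda>i. (f ^^ i) a"
  have "\<not> inj ?g"
    using fin orb by (metis finite_imageD infinite_UNIV_nat)
  then obtain i j where ij: "i < j" "?g i = ?g j"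
    by (metis injI linorder_neqE_nat)
  have "(f ^^ i) (?g (j - i)) = (f ^^ i) a"
    using ij by (metis funpow_add le_add_diff_inverse less_imp_le o_apply)
  moreover have "inj_on (f ^^ i) N"
    using bij_betw_funpow[OF bij] by (simp add: bij_betw_def)
  moreover have "?g (j - i) \<in> N" "a \<in> N"
    using orb by (auto intro: range_eqI[of _ _ 0])
  ultimately have "?g (j - i) = a"
    by (auto dest: inj_onD)
  then have ex: "\<exists>p. 0 < p \<and> ?g p = a"
    using ij by (intro exI[of _ "j - i"]) auto
  define n where "n = (LEAST p. 0 < p \<and> ?g p = a)"
  have n: "0 < n" "?g n = a"
    using LeastI_ex[OF ex] by (simp_all add: n_def)
  have inj: "inj_on ?g {0..<n}"
    by (rule inj_on_funpow_least) (use n not_less_Least in \<open>auto simp: n_def\<close>)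
  have "?g m \<in> ?g ` {0..<n}" for m
    using funpow_mod_eq[OF n(2), of m] n(1) by (metis atLeastLessThan_iff image_eqI mod_less_divisor zero_le)
  then have "N = ?g ` {0..<n}"
    using orb by auto
  then have "card N = n"
    using card_image[OF inj] by simp
  then show "inj_on ?g {0..<card N}" "?g (card N) = a"
    using inj n by simp_all
qed

definition consec_pairs :: "'a list \<Rightarrow> ('a \<times> 'a) set" where
  "consec_pairs xs = set (zip xs (tl xs))"

definition cyclic_pairs :: "'a list \<Rightarrow> ('a \<times> 'a) set" where
  "cyclic_pairs C = consec_pairs (C @ [hd C])"

lemma consec_pairs_Nil [simp]: "consec_pairs [] = {}"
  and consec_pairs_singleton [simp]: "consec_pairs [x] = {}"
  and consec_pairs_Cons_Cons [simp]: "consec_pairs (x # y # zs) = insert (x, y) (consec_pairs (y # zs))"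
  by (auto simp: consec_pairs_def)

lemma consec_pairs_append: "consec_pairs (xs @ y # ys) = consec_pairs (xs @ [y]) \<union> consec_pairs (y # ys)"
  by (induction xs rule: induct_list012) auto

lemma consec_pairs_iff:
  "(a, b) \<in> consec_pairs xs \<longleftrightarrow> (\<exists>k. Suc k < length xs \<and> xs ! k = a \<and> xs ! Suc k = b)"
  by (auto simp: consec_pairs_def in_set_zip nth_tl less_diff_conv)

lemma consec_pairs_in_set: "(a, b) \<in> consec_pairs xs \<Longrightarrow> a \<in> set xs \<and> b \<in> set xs"
  by (auto simp: consec_pairs_iff)

lemma consec_pairs_last: "xs \<noteq> [] \<Longrightarrow> (last xs, y) \<in> consec_pairs (xs @ [y])"
  by (induction xs rule: induct_list012) auto

lemma consec_pairs_around:
  "xs \<noteq> [] \<Longrightarrow> ys \<noteq> [] \<Longrightarrow>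
     (last xs, x) \<in> consec_pairs (xs @ x # ys) \<and> (x, hd ys) \<in> consec_pairs (xs @ x # ys)"
  using consec_pairs_append[of xs x ys] consec_pairs_last[of xs x] by (cases ys) auto

lemma consec_pairs_snd_not_hd:
  assumes "distinct xs" "(a, b) \<in> consec_pairs xs"
  shows "b \<noteq> hd xs"
proof
  assume b: "b = hd xs"
  obtain k where k: "Suc k < length xs" "xs ! Suc k = b"
    using assms(2) by (auto simp: consec_pairs_iff)
  moreover have "xs \<noteq> []"
    using k by auto
  ultimately have "xs ! Suc k = xs ! 0"
    using b by (simp add: hd_conv_nth)
  then show False
    using nth_eq_iff_index_eq[OF assms(1), of "Suc k" 0] k by (cases xs) auto
qed

lemma consec_pairs_fst_not_last:
  assumes "distinct xs" "(a, b) \<in> consec_pairs xs"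
  shows "a \<noteq> last xs"
proof
  assume a: "a = last xs"
  obtain k where k: "Suc k < length xs" "xs ! k = a"
    using assms(2) by (auto simp: consec_pairs_iff)
  moreover have "xs \<noteq> []"
    using k by auto
  ultimately have "xs ! k = xs ! (length xs - 1)"
    using a by (simp add: last_conv_nth)
  then show False
    using nth_eq_iff_index_eq[OF assms(1), of k "length xs - 1"] k by (cases xs) auto
qed

lemma consec_pairs_unique_fst:
  assumes "distinct (tl xs)" "(a, b) \<in> consec_pairs xs" "(a', b) \<in> consec_pairs xs"
  shows "a = a'"
proof -
  obtain k k' where k: "Suc k < length xs" "xs ! k = a" "xs ! Suc k = b"
    and k': "Suc k' < length xs" "xs ! k' = a'" "xs ! Suc k' = b"
    using assms(2,3) by (auto simp: consec_pairs_iff)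
  then have "tl xs ! k = tl xs ! k'"
    by (simp add: nth_tl)
  then have "k = k'"
    using nth_eq_iff_index_eq[OF assms(1), of k k'] k k' by simp
  then show ?thesis
    using k k' by simp
qed

lemma consec_pairs_unique_snd:
  assumes "distinct (butlast xs)" "(a, b) \<in> consec_pairs xs" "(a, b') \<in> consec_pairs xs"
  shows "b = b'"
proof -
  obtain k k' where k: "Suc k < length xs" "xs ! k = a" "xs ! Suc k = b"
    and k': "Suc k' < length xs" "xs ! k' = a" "xs ! Suc k' = b'"
    using assms(2,3) by (auto simp: consec_pairs_iff)
  then have "butlast xs ! k = butlast xs ! k'"
    by (simp add: nth_butlast)
  then have "k = k'"
    using nth_eq_iff_index_eq[OF assms(1), of k k'] k k' by simp
  then show ?thesis
    using k k' by simp
qed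

lemma cyclic_pairs_in_set: "(a, b) \<in> cyclic_pairs C \<Longrightarrow> a \<in> set C \<and> b \<in> set C"
  by (cases C) (auto simp: cyclic_pairs_def dest!: consec_pairs_in_set)

lemma cyclic_pairs_unique_fst:
  "distinct C \<Longrightarrow> (a, b) \<in> cyclic_pairs C \<Longrightarrow> (a', b) \<in> cyclic_pairs C \<Longrightarrow> a = a'"
  unfolding cyclic_pairs_def by (rule consec_pairs_unique_fst) (cases C, auto)

lemma cyclic_pairs_unique_snd:
  "distinct C \<Longrightarrow> (a, b) \<in> cyclic_pairs C \<Longrightarrow> (a, b') \<in> cyclic_pairs C \<Longrightarrow> b = b'"
  unfolding cyclic_pairs_def by (rule consec_pairs_unique_snd) auto

lemma cyclic_pairs_Cons3:
  "cyclic_pairs (c0 # c1 # v # D) = {(c0, c1), (c1, v), (v, hd (D @ [c0]))} \<union> consec_pairs (D @ [c0])"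
  by (cases D) (auto simp: cyclic_pairs_def)

lemma cyclic_pairs_Cons2_append:
  "cyclic_pairs (c0 # c1 # W @ D) =
     {(c0, c1)} \<union> consec_pairs (c1 # W @ [hd (D @ [c0])]) \<union> consec_pairs (D @ [c0])"
proof -
  have "c1 # W @ D @ [c0] = (c1 # W) @ hd (D @ [c0]) # tl (D @ [c0])"
    by (cases D) auto
  then show ?thesis
    using consec_pairs_append[of "c1 # W" "hd (D @ [c0])" "tl (D @ [c0])"]
    by (cases D) (auto simp: cyclic_pairs_def)
qed

lemma cyclic_pairs_rotate: "cyclic_pairs (xs @ y # ys) = cyclic_pairs (y # ys @ xs)"
proof (cases xs)
  case (Cons x xs')
  have "consec_pairs (x # xs' @ y # ys @ [x]) = consec_pairs ((x # xs') @ [y]) \<union> consec_pairs (y # ys @ [x])"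
    using consec_pairs_append[of "x # xs'" y "ys @ [x]"] by simp
  moreover have "consec_pairs (y # ys @ x # xs' @ [y]) = consec_pairs ((y # ys) @ [x]) \<union> consec_pairs (x # xs' @ [y])"
    using consec_pairs_append[of "y # ys" x "xs' @ [y]"] by simp
  ultimately show ?thesis
    using Cons by (auto simp: cyclic_pairs_def)
qed simp

lemma cyclic_pairs_chord:
  "cyclic_pairs (X @ ci # Y @ cj # Z) = consec_pairs (ci # Y @ [cj]) \<union> consec_pairs (cj # (Z @ X) @ [ci])"
  "cyclic_pairs (X @ ci # cj # Z) = consec_pairs (cj # (Z @ X) @ [ci]) \<union> {(ci, cj)}"
  "cyclic_pairs (cj # ci # Y) = consec_pairs (ci # Y @ [cj]) \<union> {(cj, ci)}"
  "cyclic_pairs (ci # Y @ [cj]) = consec_pairs (ci # Y @ [cj]) \<union> {(cj, ci)}"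
proof -
  show "cyclic_pairs (X @ ci # Y @ cj # Z) = consec_pairs (ci # Y @ [cj]) \<union> consec_pairs (cj # (Z @ X) @ [ci])"
    unfolding cyclic_pairs_rotate[of X]
    using consec_pairs_append[of "ci # Y" cj "Z @ X @ [ci]"] by (simp add: cyclic_pairs_def)
  show "cyclic_pairs (X @ ci # cj # Z) = consec_pairs (cj # (Z @ X) @ [ci]) \<union> {(ci, cj)}"
    unfolding cyclic_pairs_rotate[of X] by (auto simp: cyclic_pairs_def)
  show "cyclic_pairs (cj # ci # Y) = consec_pairs (ci # Y @ [cj]) \<union> {(cj, ci)}"
    by (auto simp: cyclic_pairs_def)
  show "cyclic_pairs (ci # Y @ [cj]) = consec_pairs (ci # Y @ [cj]) \<union> {(cj, ci)}"
    using consec_pairs_append[of "ci # Y" cj "[ci]"] by (simp add: cyclic_pairs_def)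
qed

lemma chord_lists:
  assumes "Suc i < j" "j < length C"
  defines "Y \<equiv> take (j - Suc i) (drop (Suc i) C)"
  shows "C = take i C @ C ! i # Y @ C ! j # drop (Suc j) C"
    and "take (Suc j) C = take i C @ C ! i # Y @ [C ! j]"
    and "take (Suc i) C @ drop j C = take i C @ C ! i # C ! j # drop (Suc j) C"
    and "take (j - i) (drop i C) = C ! i # Y"
    and "Y \<noteq> []"
proof -
  have i: "i < length C"
    using assms by simp
  have dj: "drop j C = C ! j # drop (Suc j) C"
    using assms(2) by (simp add: Cons_nth_drop_Suc)
  have "drop (Suc i) C = Y @ drop (j - Suc i) (drop (Suc i) C)"
    unfolding Y_def by (rule append_take_drop_id[symmetric])
  also have "drop (j - Suc i) (drop (Suc i) C) = drop j C"
    using assms(1) by simp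
  finally have ds: "drop (Suc i) C = Y @ C ! j # drop (Suc j) C"
    using dj by simp
  show C: "C = take i C @ C ! i # Y @ C ! j # drop (Suc j) C"
    using id_take_nth_drop[OF i] ds by simp
  have lY: "length Y = j - Suc i"
    using assms by (simp add: Y_def)
  then show "Y \<noteq> []"
    using assms(1) by auto
  have "take (Suc j) C = take (Suc j) (take i C @ C ! i # Y @ C ! j # drop (Suc j) C)"
    using C by simp
  also have "\<dots> = take i C @ C ! i # Y @ [C ! j]"
  proof -
    have "Suc j - i = Suc (Suc (length Y))" "min (Suc j) i = i"
      using lY assms(1) by simp_all
    then show ?thesis
      using i by (simp add: take_append)
  qed
  finally show "take (Suc j) C = take i C @ C ! i # Y @ [C ! j]" .
  show "take (Suc i) C @ drop j C = take i C @ C ! i # C ! j # drop (Suc j) C"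
    using i dj by (simp add: take_Suc_conv_app_nth)
  have "drop i C = C ! i # drop (Suc i) C" "j - i = Suc (j - Suc i)"
    using i assms(1) by (simp_all add: Cons_nth_drop_Suc)
  then show "take (j - i) (drop i C) = C ! i # Y"
    unfolding Y_def by (simp only: take_Suc_Cons)
qed

lemma nth_0_1_in_set: "2 \<le> length xs \<Longrightarrow> xs ! 0 \<in> set xs \<and> xs ! 1 \<in> set xs"
  by (cases xs; cases "tl xs") auto

lemma nth_0_1_distinct: "distinct xs \<Longrightarrow> 2 \<le> length xs \<Longrightarrow> xs ! 0 \<noteq> xs ! 1"
  by (cases xs; cases "tl xs") auto

lemma distinct_prefix_eq_by_last:
  assumes "distinct (ys @ zs)" "ys @ zs = ys' @ zs'" "ys \<noteq> []" "ys' \<noteq> []" "last ys = last ys'"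
  shows "ys = ys'"
proof -
  obtain us where "ys = ys' @ us \<or> ys @ us = ys'"
    using assms(2) by (auto simp: append_eq_append_conv2)
  then show ?thesis
  proof
    assume ys: "ys = ys' @ us"
    show ?thesis
    proof (cases "us = []")
      case False
      then have "last ys' \<in> set ys'" "last ys' \<in> set us"
        using assms(4,5) ys by (auto dest: sym)
      then show ?thesis
        using assms(1) ys by auto
    qed (use ys in simp)
  next
    assume ys': "ys @ us = ys'"
    show ?thesis
    proof (cases "us = []")
      case False
      then have "last ys \<in> set us"
        using assms(5) ys' by (metis last_appendR last_in_set)
      moreover have "last ys \<in> set ys"
        using assms(3) by simp
      moreover have "distinct (ys @ us)"
        using assms(1,2) ys' by (metis append.assoc distinct_append)
      ultimately show ?thesis
        by (auto simp del: last_in_set)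
    qed (use ys' in simp)
  qed
qed

lemma prefix_of_snoc: "M @ zs = X @ [v] \<Longrightarrow> v \<notin> set M \<Longrightarrow> \<exists>zs'. X = M @ zs'"
  by (cases zs rule: rev_cases) auto

lemma split_at_first_eq:
  assumes "xs @ y # ys = xs' @ y' # ys'" "\<forall>z\<in>set xs. \<not> P z" "\<forall>z\<in>set xs'. \<not> P z" "P y" "P y'"
  shows "xs = xs' \<and> y = y' \<and> ys = ys'"
  using assms
proof (induction xs arbitrary: xs')
  case Nil then show ?case by (cases xs') auto
next
  case (Cons a xs) then show ?case by (cases xs') auto
qed

lemma successively_stays_in_side:
  assumes "successively E xs" "set xs \<subseteq> A \<union> B" "\<forall>p\<in>A. \<forall>q\<in>B. \<not> E p q" "xs \<noteq> []" "hd xs \<in> A"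
  shows "set xs \<subseteq> A"
  using assms by (induction xs rule: induct_list012) auto

locale plane_triangulation =
  fixes V :: "'v set" and E :: "'v \<Rightarrow> 'v \<Rightarrow> bool" and rot :: "'v \<Rightarrow> 'v \<Rightarrow> 'v"
  assumes triangular: "triangular_graph V E rot"
begin

abbreviation ccw :: "'v \<Rightarrow> 'v \<Rightarrow> 'v list" where
  "ccw \<equiv> ccw_list E rot"

lemma finite_V: "finite V"
  and adj_in_V: "E u v \<Longrightarrow> u \<in> V \<and> v \<in> V"
  and adj_sym: "E u v \<Longrightarrow> E v u"
  and adj_irrefl: "\<not> E u u"
  and rotation_system: "rotation_system V E rot"
  and rot_face: "E u v \<Longrightarrow> rot (rot v u) v = u \<and> rot u (rot v u) = v"
  using triangular by (auto simp: triangular_graph_def Let_def)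

lemma adj_neq: "E u v \<Longrightarrow> u \<noteq> v"
  using adj_irrefl by auto

lemma finite_nbrs: "finite (nbrs E x)"
proof -
  have "nbrs E x \<subseteq> V"
    using adj_in_V by (auto simp: nbrs_def)
  then show ?thesis
    using finite_subset finite_V by blast
qed

lemma rot_bij: "x \<in> V \<Longrightarrow> bij_betw (rot x) (nbrs E x) (nbrs E x)"
  using rotation_system by (simp add: rotation_system_def)

lemma adj_rot: "E x y \<Longrightarrow> E x (rot x y)"
  using rot_bij[of x] adj_in_V by (auto simp: nbrs_def bij_betw_def)

lemma rot_inj: "E x y \<Longrightarrow> E x z \<Longrightarrow> rot x y = rot x z \<Longrightarrow> y = z"
  using rot_bij[of x] adj_in_V by (auto simp: nbrs_def bij_betw_def dest: inj_onD)

lemma adj_rot_across: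
  assumes "E x y"
  shows "E y (rot x y)"
proof -
  have "E (rot x y) x"
    using adj_rot[OF assms] adj_sym by blast
  then have "E (rot x y) (rot (rot x y) x)"
    by (rule adj_rot)
  then show ?thesis
    using rot_face[OF adj_sym[OF assms]] adj_sym by simp
qed

lemma adj_funpow_rot: "E x a \<Longrightarrow> E x ((rot x ^^ i) a)"
  by (induction i) (auto intro: adj_rot)

lemma rot_orbit:
  assumes "E x a"
  shows "inj_on (\<lambda>i. (rot x ^^ i) a) {0..<deg E x}" and "(rot x ^^ deg E x) a = a"
proof -
  have "x \<in> V"
    using adj_in_V assms by blast
  then have "nbrs E x = range (\<lambda>i. (rot x ^^ i) a)"
    using rotation_system assms by (auto simp: rotation_system_def nbrs_def)
  then show "inj_on (\<lambda>i. (rot x ^^ i) a) {0..<deg E x}" "(rot x ^^ deg E x) a = a"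
    using bij_orbit_period[OF finite_nbrs rot_bij[OF \<open>x \<in> V\<close>]] by (simp_all add: deg_def)
qed

lemma length_ccw [simp]: "length (ccw x a) = deg E x"
  by (simp add: ccw_list_def)

lemma nth_ccw: "i < deg E x \<Longrightarrow> ccw x a ! i = (rot x ^^ i) a"
  by (simp add: ccw_list_def)

lemma distinct_ccw: "E x a \<Longrightarrow> distinct (ccw x a)"
  using rot_orbit(1) by (simp add: ccw_list_def distinct_map)

lemma deg_pos: "E x a \<Longrightarrow> 0 < deg E x"
  using finite_nbrs by (auto simp: deg_def nbrs_def card_gt_0_iff)

lemma set_ccw: "E x a \<Longrightarrow> set (ccw x a) = nbrs E x"
proof -
  assume a: "E x a"
  have "set (ccw x a) \<subseteq> nbrs E x"
    using adj_funpow_rot[OF a] by (auto simp: ccw_list_def nbrs_def)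
  moreover have "card (set (ccw x a)) = deg E x"
    using distinct_card[OF distinct_ccw[OF a]] by simp
  ultimately show ?thesis
    using finite_nbrs by (simp add: card_subset_eq deg_def)
qed

lemma mem_ccw: "E x a \<Longrightarrow> y \<in> set (ccw x a) \<longleftrightarrow> E x y"
  using set_ccw by (auto simp: nbrs_def)

lemma ccw_Cons: "E x a \<Longrightarrow> ccw x a = a # tl (ccw x a)"
  using deg_pos[of x a] by (cases "ccw x a") (auto simp: ccw_list_def upt_conv_Cons)

lemma ccw_nonempty_iff: "ccw x a \<noteq> [] \<longleftrightarrow> 0 < deg E x"
  by (simp flip: length_greater_0_conv)

lemma hd_ccw: "ccw x a \<noteq> [] \<Longrightarrow> hd (ccw x a) = a"
  by (simp add: hd_conv_nth nth_ccw ccw_nonempty_iff)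

lemma ccw_rotate:
  assumes a: "E x a" and k: "k < deg E x"
  shows "ccw x (ccw x a ! k) = rotate k (ccw x a)"
proof (rule nth_equalityI)
  fix i assume "i < length (ccw x (ccw x a ! k))"
  then have i: "i < deg E x"
    by simp
  have "rotate k (ccw x a) ! i = (rot x ^^ ((k + i) mod deg E x)) a"
    using i deg_pos[OF a] by (simp add: nth_rotate add.commute nth_ccw)
  also have "\<dots> = (rot x ^^ i) ((rot x ^^ k) a)"
    by (simp add: funpow_mod_eq[OF rot_orbit(2)[OF a]] funpow_add add.commute)
  finally show "ccw x (ccw x a ! k) ! i = rotate k (ccw x a) ! i"
    using i k by (simp add: nth_ccw)
qed simp

lemma ccw_rotate_split:
  assumes "E x a" and "ccw x a = P @ c # Q"
  shows "ccw x c = c # Q @ P"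
proof -
  have "length P < deg E x" "ccw x a ! length P = c"
    using assms(2) length_ccw[of x a] by (auto simp del: length_ccw)
  then have "ccw x c = rotate (length P) (ccw x a)"
    using ccw_rotate[OF assms(1)] by metis
  then show ?thesis
    using assms(2) by (simp add: rotate_drop_take)
qed

lemma ccw_consecutive:
  assumes "E x a" and "ccw x a = P @ y # z # Q"
  shows "z = rot x y"
proof -
  have "Suc (length P) < deg E x"
    using assms(2) length_ccw[of x a] by (auto simp del: length_ccw)
  moreover have "ccw x a ! length P = y" "ccw x a ! Suc (length P) = z"
    using assms(2) by (auto simp: nth_append)
  ultimately show ?thesis
    by (simp add: nth_ccw)
qed

lemma rot_last_ccw:
  assumes "E x a"
  shows "rot x (last (ccw x a)) = a"
proof -
  have d: "0 < deg E x"
    using deg_pos[OF assms] .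
  then have "last (ccw x a) = (rot x ^^ (deg E x - 1)) a"
    by (simp add: last_conv_nth nth_ccw ccw_nonempty_iff)
  then show ?thesis
    using d rot_orbit(2)[OF assms] by (metis Suc_diff_1 funpow.simps(2) o_apply)
qed

lemma successively_ccw: "E x a \<Longrightarrow> successively E (ccw x a)"
  by (auto simp: successively_conv_nth nth_ccw adj_funpow_rot intro: adj_rot_across)

lemma ccw_rot: "E x v \<Longrightarrow> ccw x (rot x v) = tl (ccw x v) @ [v]"
proof (cases "tl (ccw x v)")
  case Nil
  assume v: "E x v"
  then have "ccw x v = [v]"
    using ccw_Cons[OF v] Nil by simp
  then show ?thesis
    using rot_last_ccw[OF v] Nil by simp
next
  case (Cons a T)
  assume v: "E x v"
  then have "ccw x v = [] @ v # a # T"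
    using ccw_Cons[OF v] Cons by simp
  moreover from this have "a = rot x v"
    using ccw_consecutive[OF v] by blast
  ultimately show ?thesis
    using ccw_rotate_split[OF v, of "[v]" a T] Cons by simp
qed

lemma ccw_before:
  assumes xv: "E x v" and xs: "E x s" and s: "rot x s = v" and av: "rot x v \<noteq> v"
  obtains L where "ccw x (rot x v) = L @ [v]" "L \<noteq> []" "last L = s" "set L = nbrs E x - {v}"
proof
  let ?L = "tl (ccw x v)"
  have Cv: "ccw x v = v # ?L"
    using ccw_Cons[OF xv] .
  show "ccw x (rot x v) = ?L @ [v]"
    using ccw_rot[OF xv] .
  then show L: "?L \<noteq> []"
    using av hd_ccw[of x "rot x v"] by auto
  have "E x (last ?L)"
    using L mem_ccw[OF xv] Cv by (metis last_in_set list.set_intros(2))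
  moreover have "rot x (last ?L) = v"
    using rot_last_ccw[OF xv] L Cv by (metis last_ConsR)
  ultimately show "last ?L = s"
    using rot_inj[OF _ xs] s by metis
  show "set ?L = nbrs E x - {v}"
    using distinct_ccw[OF xv] set_ccw[OF xv] Cv by (metis Diff_insert_absorb distinct.simps(2) list.simps(15))
qed

lemma ccw_rot_prefix:
  assumes "E x v" "ccw x (rot x v) = M @ zs" "v \<notin> set M"
  obtains zs' where "ccw x v = v # M @ zs'"
  using prefix_of_snoc[of M zs "tl (ccw x v)" v] ccw_rot[OF assms(1)] assms(2,3) ccw_Cons[OF assms(1)]
  by auto

definition nbrs_in :: "'v set \<Rightarrow> 'v \<Rightarrow> 'v set" where
  "nbrs_in S x = {y \<in> S. E x y}"

definition ccw_interval :: "'v set \<Rightarrow> 'v \<Rightarrow> 'v \<Rightarrow> 'v \<Rightarrow> bool" where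
  "ccw_interval S x a s \<longleftrightarrow>
     (\<exists>ys zs. ccw x a = ys @ zs \<and> ys \<noteq> [] \<and> last ys = s \<and> set ys = nbrs_in S x)"

text \<open>The near triangulation with outer cycle C (listed clockwise) is the subgraph induced by S:
  vertices off C keep all their neighbours, and the neighbours in S of a vertex x on C run
  counterclockwise from its predecessor on C to its successor on C.\<close>

definition near_triangulation :: "'v set \<Rightarrow> 'v list \<Rightarrow> bool" where
  "near_triangulation S C \<longleftrightarrow> S \<subseteq> V \<and> distinct C \<and> 2 \<le> length C \<and> set C \<subseteq> S \<and>
     (\<forall>x \<in> S - set C. \<forall>y. E x y \<longrightarrow> y \<in> S) \<and>
     (\<forall>a x s. (a, x) \<in> cyclic_pairs C \<longrightarrow> (x, s) \<in> cyclic_pairs C \<longrightarrow> ccw_interval S x a s)"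

lemma near_triangulationD:
  assumes "near_triangulation S C"
  shows "S \<subseteq> V" "distinct C" "2 \<le> length C" "set C \<subseteq> S"
    and "\<And>x y. x \<in> S - set C \<Longrightarrow> E x y \<Longrightarrow> y \<in> S"
    and "\<And>a x s. (a, x) \<in> cyclic_pairs C \<Longrightarrow> (x, s) \<in> cyclic_pairs C \<Longrightarrow> ccw_interval S x a s"
  using assms unfolding near_triangulation_def by blast+

lemma near_triangulationI:
  assumes "S \<subseteq> V" "distinct C" "2 \<le> length C" "set C \<subseteq> S"
    and "\<And>x y. x \<in> S - set C \<Longrightarrow> E x y \<Longrightarrow> y \<in> S"
    and "\<And>a x s. (a, x) \<in> cyclic_pairs C \<Longrightarrow> (x, s) \<in> cyclic_pairs C \<Longrightarrow> ccw_interval S x a s"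
  shows "near_triangulation S C"
  using assms unfolding near_triangulation_def by blast

text \<open>The strength-2 edges will form the red tree; green splits the strength-1 edges into green
  and blue ones.\<close>

definition schnyder_labels ::
  "('v \<times> 'v \<times> nat) set \<Rightarrow> ('v \<Rightarrow> 'v \<Rightarrow> bool) \<Rightarrow> 'v \<Rightarrow> 'v list \<Rightarrow> 'v \<Rightarrow> 'v list \<Rightarrow> 'v \<Rightarrow> 'v list \<Rightarrow> bool"
where
  "schnyder_labels R green x Bo g Ro b Go \<longleftrightarrow>
     (g, x, 1) \<in> R \<and> green g x \<and> (b, x, 1) \<in> R \<and> \<not> green b x \<and>
     (\<forall>y \<in> set Ro. (x, y, 2) \<in> R) \<and>
     (\<forall>y \<in> set Bo. (x, y, 1) \<in> R \<and> \<not> green x y) \<and>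
     (\<forall>y \<in> set Go. (x, y, 1) \<in> R \<and> green x y)"

definition schnyder_rotation ::
  "('v \<times> 'v \<times> nat) set \<Rightarrow> ('v \<Rightarrow> 'v \<Rightarrow> bool) \<Rightarrow> 'v \<Rightarrow> 'v \<Rightarrow> 'v list \<Rightarrow> 'v \<Rightarrow> 'v list \<Rightarrow> 'v \<Rightarrow> 'v list \<Rightarrow> bool"
where
  "schnyder_rotation R green x p Bo g Ro b Go \<longleftrightarrow>
     ccw x p = p # Bo @ g # Ro @ b # Go \<and> (p, x, 2) \<in> R \<and> schnyder_labels R green x Bo g Ro b Go"

definition schnyder_vertex :: "('v \<times> 'v \<times> nat) set \<Rightarrow> ('v \<Rightarrow> 'v \<Rightarrow> bool) \<Rightarrow> 'v \<Rightarrow> bool" where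
  "schnyder_vertex R green x \<longleftrightarrow> (\<exists>p Bo g Ro b Go. schnyder_rotation R green x p Bo g Ro b Go)"

text \<open>On the boundary only the part of the rotation inside S, the interval from a to s, is present.\<close>

definition schnyder_segment ::
  "'v set \<Rightarrow> ('v \<times> 'v \<times> nat) set \<Rightarrow> ('v \<Rightarrow> 'v \<Rightarrow> bool) \<Rightarrow> 'v \<Rightarrow> 'v \<Rightarrow> 'v \<Rightarrow> bool"
where
  "schnyder_segment S R green x a s \<longleftrightarrow>
     (\<exists>Bo g Ro b Go zs. ccw x a = (Bo @ g # Ro @ b # Go) @ zs \<and> last (Bo @ g # Ro @ b # Go) = s \<and>
        set (Bo @ g # Ro @ b # Go) = nbrs_in S x \<and> schnyder_labels R green x Bo g Ro b Go)"

definition schnyder_labelling ::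
  "'v set \<Rightarrow> 'v list \<Rightarrow> ('v \<times> 'v \<times> nat) set \<Rightarrow> ('v \<Rightarrow> 'v \<Rightarrow> bool) \<Rightarrow> ('v \<Rightarrow> nat) \<Rightarrow> bool"
where
  "schnyder_labelling S C R green t \<longleftrightarrow>
    (\<forall>u w k. (u, w, k) \<in> R \<longrightarrow> E u w \<and> u \<in> S \<and> w \<in> S \<and> {u, w} \<noteq> {C ! 0, C ! 1} \<and> (k = 1 \<or> k = 2)) \<and>
    (\<forall>u w. E u w \<longrightarrow> u \<in> S \<longrightarrow> w \<in> S \<longrightarrow> {u, w} \<noteq> {C ! 0, C ! 1} \<longrightarrow>
       (\<exists>k. (u, w, k) \<in> R \<or> (w, u, k) \<in> R)) \<and>
    (\<forall>u w k u' w' k'. (u, w, k) \<in> R \<longrightarrow> (u', w', k') \<in> R \<longrightarrow> {u, w} = {u', w'} \<longrightarrow>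
       u = u' \<and> w = w' \<and> k = k') \<and>
    (\<forall>w \<in> S. E (C ! 0) w \<longrightarrow> w \<noteq> C ! 1 \<longrightarrow> (C ! 0, w, 1) \<in> R \<and> \<not> green (C ! 0) w) \<and>
    (\<forall>w \<in> S. E (C ! 1) w \<longrightarrow> w \<noteq> C ! 0 \<longrightarrow> (C ! 1, w, 1) \<in> R \<and> green (C ! 1) w) \<and>
    (\<forall>u w. (u, w, 2) \<in> R \<longrightarrow> t u < t w) \<and>
    (\<forall>x \<in> S - {C ! 0, C ! 1}. (x \<notin> set C \<longrightarrow> schnyder_vertex R green x) \<and>
       (\<forall>a s. (a, x) \<in> cyclic_pairs C \<longrightarrow> (x, s) \<in> cyclic_pairs C \<longrightarrow> schnyder_segment S R green x a s))"

lemma ccw_interval_adj: "ccw_interval S x a s \<Longrightarrow> E x a"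
  unfolding ccw_interval_def nbrs_in_def
  by (metis (mono_tags, lifting) Nil_is_append_conv hd_append2 hd_ccw hd_in_set mem_Collect_eq)

lemma ccw_interval_all_nbrs:
  assumes "E x a" "E x s" "rot x s = a" "nbrs E x \<subseteq> S"
  shows "ccw_interval S x a s"
proof -
  have ne: "ccw x a \<noteq> []"
    using deg_pos[OF assms(1)] by (simp add: ccw_nonempty_iff)
  then have "E x (last (ccw x a))"
    using mem_ccw[OF assms(1)] last_in_set by blast
  then have "last (ccw x a) = s"
    using rot_last_ccw[OF assms(1)] rot_inj[OF _ assms(2)] assms(3) by metis
  moreover have "set (ccw x a) = nbrs_in S x"
    using set_ccw[OF assms(1)] assms(4) by (auto simp: nbrs_in_def nbrs_def)
  ultimately show ?thesis
    unfolding ccw_interval_def using ne by (intro exI[of _ "ccw x a"] exI[of _ "[]"]) auto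
qed

lemma near_triangulation_outer_face:
  assumes "outer_face_cw E rot v1 v2 v3"
  shows "near_triangulation V [v1, v2, v3]"
proof -
  have o: "E v1 v2" "E v2 v3" "E v3 v1" "rot v3 v1 = v2" "rot v2 v3 = v1" "rot v1 v2 = v3"
    using assms by (auto simp: outer_face_cw_def)
  have all: "nbrs E x \<subseteq> V" for x
    using adj_in_V by (auto simp: nbrs_def)
  have "ccw_interval V v1 v3 v2" "ccw_interval V v2 v1 v3" "ccw_interval V v3 v2 v1"
    using ccw_interval_all_nbrs adj_sym o all by blast+
  moreover have "cyclic_pairs [v1, v2, v3] = {(v1, v2), (v2, v3), (v3, v1)}"
    by (simp add: cyclic_pairs_def)
  moreover have "distinct [v1, v2, v3]"
    using o adj_irrefl by auto
  ultimately show ?thesis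
    using o adj_in_V unfolding near_triangulation_def by auto
qed

lemma schnyder_labels_mono:
  assumes "schnyder_labels R green x Bo g Ro b Go" "R \<subseteq> R'"
    and "\<forall>y \<in> set (Bo @ g # Ro @ b # Go). green' x y = green x y \<and> green' y x = green y x"
  shows "schnyder_labels R' green' x Bo g Ro b Go"
  using assms unfolding schnyder_labels_def by (simp add: subset_iff)

lemma schnyder_labels_append_blue:
  "schnyder_labels R green x Bo g Ro b Go \<Longrightarrow> \<forall>y \<in> set Bo'. (x, y, 1) \<in> R \<and> \<not> green x y \<Longrightarrow>
     schnyder_labels R green x (Bo' @ Bo) g Ro b Go"
  by (auto simp: schnyder_labels_def)

lemma schnyder_labels_append_green:
  "schnyder_labels R green x Bo g Ro b Go \<Longrightarrow> \<forall>y \<in> set Go'. (x, y, 1) \<in> R \<and> green x y \<Longrightarrow>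
     schnyder_labels R green x Bo g Ro b (Go @ Go')"
  by (auto simp: schnyder_labels_def)

lemma schnyder_vertex_mono:
  assumes "schnyder_vertex R green x" "R \<subseteq> R'" "\<forall>y. E x y \<longrightarrow> green' x y = green x y \<and> green' y x = green y x"
    and "\<forall>u w k. (u, w, k) \<in> R \<longrightarrow> E u w"
  shows "schnyder_vertex R' green' x"
proof -
  obtain p Bo g Ro b Go where F: "ccw x p = p # Bo @ g # Ro @ b # Go" "(p, x, 2) \<in> R"
    "schnyder_labels R green x Bo g Ro b Go"
    using assms(1) by (auto simp: schnyder_vertex_def schnyder_rotation_def)
  have "E x p"
    using assms(4) F(2) adj_sym by blast
  then have "\<forall>y \<in> set (Bo @ g # Ro @ b # Go). E x y"
    using mem_ccw F(1) by (metis list.set_intros(2))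
  then have "schnyder_labels R' green' x Bo g Ro b Go"
    using schnyder_labels_mono[OF F(3) assms(2)] assms(3) by auto
  then show ?thesis
    using F assms(2) unfolding schnyder_vertex_def schnyder_rotation_def by blast
qed

lemma schnyder_segment_mono:
  assumes "schnyder_segment S' R green x a s" "R \<subseteq> R'" "nbrs_in S' x = nbrs_in S x"
    and "\<forall>y \<in> nbrs_in S' x. green' x y = green x y \<and> green' y x = green y x"
  shows "schnyder_segment S R' green' x a s"
proof -
  obtain Bo g Ro b Go zs where M: "ccw x a = (Bo @ g # Ro @ b # Go) @ zs" "last (Bo @ g # Ro @ b # Go) = s"
    "set (Bo @ g # Ro @ b # Go) = nbrs_in S' x" "schnyder_labels R green x Bo g Ro b Go"
    using assms(1) by (auto simp: schnyder_segment_def)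
  have "schnyder_labels R' green' x Bo g Ro b Go"
    using schnyder_labels_mono[OF M(4) assms(2)] assms(4) unfolding M(3) by blast
  then show ?thesis
    unfolding schnyder_segment_def using M assms(3) by blast
qed

lemma schnyder_segment_interval: "schnyder_segment S R green x a s \<Longrightarrow> ccw_interval S x a s"
  unfolding schnyder_segment_def ccw_interval_def by (metis Nil_is_append_conv list.distinct(1))

lemma schnyder_segment_adj: "schnyder_segment S R green x a s \<Longrightarrow> E x a"
  by (rule ccw_interval_adj[OF schnyder_segment_interval])

lemma schnyder_labellingD:
  assumes "schnyder_labelling S C R green t"
  shows "\<And>u w k. (u, w, k) \<in> R \<Longrightarrow> E u w \<and> u \<in> S \<and> w \<in> S \<and> {u, w} \<noteq> {C ! 0, C ! 1} \<and> (k = 1 \<or> k = 2)"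
    and "\<And>u w. E u w \<Longrightarrow> u \<in> S \<Longrightarrow> w \<in> S \<Longrightarrow> {u, w} \<noteq> {C ! 0, C ! 1} \<Longrightarrow>
           \<exists>k. (u, w, k) \<in> R \<or> (w, u, k) \<in> R"
    and "\<And>u w k u' w' k'. (u, w, k) \<in> R \<Longrightarrow> (u', w', k') \<in> R \<Longrightarrow> {u, w} = {u', w'} \<Longrightarrow>
           u = u' \<and> w = w' \<and> k = k'"
    and "\<And>w. w \<in> S \<Longrightarrow> E (C ! 0) w \<Longrightarrow> w \<noteq> C ! 1 \<Longrightarrow> (C ! 0, w, 1) \<in> R \<and> \<not> green (C ! 0) w"
    and "\<And>w. w \<in> S \<Longrightarrow> E (C ! 1) w \<Longrightarrow> w \<noteq> C ! 0 \<Longrightarrow> (C ! 1, w, 1) \<in> R \<and> green (C ! 1) w"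
    and "\<And>u w. (u, w, 2) \<in> R \<Longrightarrow> t u < t w"
    and "\<And>x. x \<in> S - {C ! 0, C ! 1} \<Longrightarrow> x \<notin> set C \<Longrightarrow> schnyder_vertex R green x"
    and "\<And>x a s. x \<in> S - {C ! 0, C ! 1} \<Longrightarrow> (a, x) \<in> cyclic_pairs C \<Longrightarrow> (x, s) \<in> cyclic_pairs C \<Longrightarrow>
           schnyder_segment S R green x a s"
proof -
  note L = assms[unfolded schnyder_labelling_def]
  note L1 = L[THEN conjunct2] note L2 = L1[THEN conjunct2] note L3 = L2[THEN conjunct2]
  note L4 = L3[THEN conjunct2] note L5 = L4[THEN conjunct2] note L6 = L5[THEN conjunct2]
  show "\<And>u w k. (u, w, k) \<in> R \<Longrightarrow> E u w \<and> u \<in> S \<and> w \<in> S \<and> {u, w} \<noteq> {C ! 0, C ! 1} \<and> (k = 1 \<or> k = 2)"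
    using L[THEN conjunct1] by blast
  show "\<And>u w. E u w \<Longrightarrow> u \<in> S \<Longrightarrow> w \<in> S \<Longrightarrow> {u, w} \<noteq> {C ! 0, C ! 1} \<Longrightarrow>
          \<exists>k. (u, w, k) \<in> R \<or> (w, u, k) \<in> R"
    using L1[THEN conjunct1] by blast
  show "\<And>u w k u' w' k'. (u, w, k) \<in> R \<Longrightarrow> (u', w', k') \<in> R \<Longrightarrow> {u, w} = {u', w'} \<Longrightarrow>
          u = u' \<and> w = w' \<and> k = k'"
    using L2[THEN conjunct1] by blast
  show "\<And>w. w \<in> S \<Longrightarrow> E (C ! 0) w \<Longrightarrow> w \<noteq> C ! 1 \<Longrightarrow> (C ! 0, w, 1) \<in> R \<and> \<not> green (C ! 0) w"
    using L3[THEN conjunct1] by blast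
  show "\<And>w. w \<in> S \<Longrightarrow> E (C ! 1) w \<Longrightarrow> w \<noteq> C ! 0 \<Longrightarrow> (C ! 1, w, 1) \<in> R \<and> green (C ! 1) w"
    using L4[THEN conjunct1] by blast
  show "\<And>u w. (u, w, 2) \<in> R \<Longrightarrow> t u < t w"
    using L5[THEN conjunct1] by blast
  show "\<And>x. x \<in> S - {C ! 0, C ! 1} \<Longrightarrow> x \<notin> set C \<Longrightarrow> schnyder_vertex R green x"
    using L6 by blast
  show "\<And>x a s. x \<in> S - {C ! 0, C ! 1} \<Longrightarrow> (a, x) \<in> cyclic_pairs C \<Longrightarrow> (x, s) \<in> cyclic_pairs C \<Longrightarrow>
          schnyder_segment S R green x a s"
    using L6 by blast
qed

lemma schnyder_labellingI:
  assumes "\<And>u w k. (u, w, k) \<in> R \<Longrightarrow> E u w \<and> u \<in> S \<and> w \<in> S \<and> {u, w} \<noteq> {C ! 0, C ! 1} \<and> (k = 1 \<or> k = 2)"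
    and "\<And>u w. E u w \<Longrightarrow> u \<in> S \<Longrightarrow> w \<in> S \<Longrightarrow> {u, w} \<noteq> {C ! 0, C ! 1} \<Longrightarrow>
           \<exists>k. (u, w, k) \<in> R \<or> (w, u, k) \<in> R"
    and "\<And>u w k u' w' k'. (u, w, k) \<in> R \<Longrightarrow> (u', w', k') \<in> R \<Longrightarrow> {u, w} = {u', w'} \<Longrightarrow>
           u = u' \<and> w = w' \<and> k = k'"
    and "\<And>w. w \<in> S \<Longrightarrow> E (C ! 0) w \<Longrightarrow> w \<noteq> C ! 1 \<Longrightarrow> (C ! 0, w, 1) \<in> R \<and> \<not> green (C ! 0) w"
    and "\<And>w. w \<in> S \<Longrightarrow> E (C ! 1) w \<Longrightarrow> w \<noteq> C ! 0 \<Longrightarrow> (C ! 1, w, 1) \<in> R \<and> green (C ! 1) w"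
    and "\<And>u w. (u, w, 2) \<in> R \<Longrightarrow> t u < t w"
    and "\<And>x. x \<in> S - {C ! 0, C ! 1} \<Longrightarrow> x \<notin> set C \<Longrightarrow> schnyder_vertex R green x"
    and "\<And>x a s. x \<in> S - {C ! 0, C ! 1} \<Longrightarrow> (a, x) \<in> cyclic_pairs C \<Longrightarrow> (x, s) \<in> cyclic_pairs C \<Longrightarrow>
           schnyder_segment S R green x a s"
  shows "schnyder_labelling S C R green t"
  unfolding schnyder_labelling_def using assms by blast

lemma schnyder_labelling_empty: "S = {C ! 0, C ! 1} \<Longrightarrow> schnyder_labelling S C {} green t"
  unfolding schnyder_labelling_def using adj_irrefl by (auto simp: insert_commute)

end

context plane_triangulation
begin

lemma chordless_adj_v3:
  assumes "3 \<le> length C" "\<not> has_chord E C" "y \<in> set C" "E (C ! 2) y"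
  shows "y = C ! 1 \<or> y = next_after_v3 C"
proof -
  obtain k where k: "k < length C" "y = C ! k"
    using assms(3) by (metis in_set_conv_nth)
  have "k \<noteq> 2"
    using assms(4) k adj_irrefl by auto
  then consider "k = 0" | "k = 1" | "k = 3" | "4 \<le> k"
    by linarith
  then show ?thesis
  proof cases
    case 1
    have "length C = 3"
    proof (rule ccontr)
      assume "length C \<noteq> 3"
      then have "has_chord E C"
        unfolding has_chord_def using assms(1,4) k 1 adj_sym by (intro exI[of _ 0] exI[of _ 2]) auto
      then show False
        using assms(2) by simp
    qed
    then show ?thesis
      using 1 k by (simp add: next_after_v3_def)
  next
    case 4
    then have "has_chord E C"
      unfolding has_chord_def using assms(4) k by (intro exI[of _ 2] exI[of _ k]) auto
    then show ?thesis
      using assms(2) by simp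
  qed (use k in \<open>simp_all add: next_after_v3_def\<close>)
qed

lemma nbrs_in_Diff: "nbrs_in (S - {v}) x = nbrs_in S x - {v}"
  by (auto simp: nbrs_in_def)

lemma ccw_interval_drop_first:
  assumes iv: "ccw_interval S x v s" and sv: "s \<noteq> v"
  shows "ccw_interval (S - {v}) x (rot x v) s"
proof -
  obtain ys zs where ys: "ccw x v = ys @ zs" "ys \<noteq> []" "last ys = s" "set ys = nbrs_in S x"
    using iv by (auto simp: ccw_interval_def)
  have xv: "E x v"
    using ccw_interval_adj[OF iv] .
  obtain ys' where ys': "ys = v # ys'"
    using ccw_Cons[OF xv] ys(1,2) by (cases ys) auto
  have "ys' \<noteq> []" "last ys' = s"
    using ys(3) ys' sv by auto
  moreover have "ccw x (rot x v) = ys' @ zs @ [v]"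
    using ccw_rot[OF xv] ys(1) ys' by simp
  moreover have "set ys' = nbrs_in (S - {v}) x"
    using distinct_ccw[OF xv] ys(1,4) ys' by (auto simp: nbrs_in_Diff)
  ultimately show ?thesis
    unfolding ccw_interval_def by blast
qed

lemma ccw_interval_drop_last:
  assumes iv: "ccw_interval S x a v" and xs: "E x s" and s: "rot x s = v" and av: "a \<noteq> v"
  shows "ccw_interval (S - {v}) x a s"
proof -
  obtain ys zs where ys: "ccw x a = ys @ zs" "ys \<noteq> []" "last ys = v" "set ys = nbrs_in S x"
    using iv by (auto simp: ccw_interval_def)
  have xa: "E x a"
    using ccw_interval_adj[OF iv] .
  obtain ys' where ys': "ys = ys' @ [v]"
    using ys(2,3) by (metis append_butlast_last_id)
  have "hd ys = a"
    using ccw_Cons[OF xa] ys(1,2) by (cases ys) auto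
  then have ne: "ys' \<noteq> []"
    using ys' av by auto
  then obtain l P where l: "ys' = P @ [l]"
    by (metis append_butlast_last_id)
  then have "v = rot x l"
    using ccw_consecutive[OF xa, of P l v zs] ys(1) ys' by simp
  moreover have "E x l"
    using ys(4) ys' l by (auto simp: nbrs_in_def)
  ultimately have "last ys' = s"
    using l rot_inj[OF _ xs] s by auto
  moreover have "set ys' = nbrs_in (S - {v}) x"
    using distinct_ccw[OF xa] ys(1,4) ys' by (auto simp: nbrs_in_Diff)
  moreover have "ccw x a = ys' @ v # zs"
    using ys(1) ys' by simp
  ultimately show ?thesis
    unfolding ccw_interval_def using ne by blast
qed

end

locale chordless_step = plane_triangulation +
  fixes S and C
  assumes near: "near_triangulation S C" and long: "3 \<le> length C" and chordless: "\<not> has_chord E C"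
begin

abbreviation "v1 \<equiv> C ! 0"
abbreviation "v2 \<equiv> C ! 1"
abbreviation "v3 \<equiv> C ! 2"
abbreviation "nxt \<equiv> next_after_v3 C"
abbreviation "rest \<equiv> drop 3 C"

definition inner where
  "inner = takeWhile (\<lambda>w. w \<noteq> nxt) (tl (ccw v3 v2))"

abbreviation "fan \<equiv> v2 # inner @ [nxt]"
abbreviation "closing \<equiv> rest @ [v1]"
abbreviation "C_del \<equiv> v1 # v2 # inner @ rest"
abbreviation "S_del \<equiv> S - {v3}"

lemma C_eq: "C = v1 # v2 # v3 # rest"
  using long by (cases C; cases "tl C"; cases "tl (tl C)") (auto simp: numeral_3_eq_3)

lemma nxt_eq: "nxt = hd closing"
proof (cases "rest = []")
  case False
  then have "hd rest = C ! 3"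
    by (simp add: hd_drop_conv_nth)
  then show ?thesis
    using False by (simp add: next_after_v3_def)
qed (simp add: next_after_v3_def)

lemma distinct_C: "distinct C"
  using near_triangulationD(2)[OF near] .

lemma distinct_v123: "v1 \<noteq> v2" "v1 \<noteq> v3" "v2 \<noteq> v3" "v1 \<notin> set rest" "v2 \<notin> set rest" "v3 \<notin> set rest"
  using distinct_C C_eq by (metis distinct.simps(2) list.set_intros(1) list.set_intros(2))+

lemma cyclic_pairs_C: "cyclic_pairs C = {(v1, v2), (v2, v3), (v3, nxt)} \<union> consec_pairs closing"
  using cyclic_pairs_Cons3[of v1 v2 v3 rest] C_eq nxt_eq by simp

lemma nxt_in_closing: "nxt \<in> set closing"
  using nxt_eq by (metis append_is_Nil_conv hd_in_set not_Cons_self2)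

lemma nxt_neq: "nxt \<noteq> v2" "nxt \<noteq> v3"
  using nxt_in_closing distinct_v123 by auto

lemma fan_interval:
  obtains zs where "ccw v3 v2 = fan @ zs" "set fan = nbrs_in S v3" "distinct fan"
proof -
  have "ccw_interval S v3 v2 nxt"
    using near_triangulationD(6)[OF near] cyclic_pairs_C by blast
  then obtain ys zs where ys: "ccw v3 v2 = ys @ zs" "ys \<noteq> []" "last ys = nxt" "set ys = nbrs_in S v3"
    by (auto simp: ccw_interval_def)
  have E32: "E v3 v2"
    using ccw_interval_adj[OF \<open>ccw_interval S v3 v2 nxt\<close>] .
  have dys: "distinct ys"
    using distinct_ccw[OF E32] ys(1) by simp
  obtain r where r: "ys = v2 # r"
    using ccw_Cons[OF E32] ys(1,2) by (cases ys) auto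
  then have "r \<noteq> []"
    using ys(3) nxt_neq by auto
  then have "r = butlast r @ [nxt]"
    using r ys(3) by (metis append_butlast_last_id last_ConsR)
  moreover have "nxt \<notin> set (butlast r)"
    using dys r calculation by (metis distinct.simps(2) distinct_append not_distinct_conv_prefix)
  moreover have "tl (ccw v3 v2) = butlast r @ nxt # zs"
    using ys(1) r calculation(1) by (metis append_Cons append_eq_append_conv2 list.sel(3) self_append_conv2)
  ultimately have "inner = butlast r"
    unfolding inner_def by (auto simp: takeWhile_append2 takeWhile_tail)
  then show ?thesis
    using that[of zs] ys r dys \<open>r = butlast r @ [nxt]\<close> by simp
qed

lemma ccw_v3: "\<exists>zs. ccw v3 v2 = fan @ zs"
  and set_fan: "set fan = nbrs_in S v3"
  and distinct_fan: "distinct fan"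
  using fan_interval by metis+

lemma adj_v3_fan: "y \<in> set fan \<Longrightarrow> E v3 y"
  using set_fan by (auto simp: nbrs_in_def)

lemma fan_subset: "set fan \<subseteq> S"
  using set_fan by (auto simp: nbrs_in_def)

lemma cycle_after_delete_eq: "cycle_after_delete E rot C = C_del"
  unfolding cycle_after_delete_def inner_def by simp

lemma inner_disjoint: "set inner \<inter> set C = {}"
proof -
  have "y = v2 \<or> y = nxt" if "y \<in> set inner" "y \<in> set C" for y
    using chordless_adj_v3[OF long chordless that(2)] adj_v3_fan that(1) by simp
  then show ?thesis
    using distinct_fan by auto
qed

lemma cyclic_pairs_C_del: "cyclic_pairs C_del = {(v1, v2)} \<union> consec_pairs fan \<union> consec_pairs closing"
  using cyclic_pairs_Cons2_append[of v1 v2 inner rest] nxt_eq by simp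

lemma fan_rot: "(p, q) \<in> consec_pairs fan \<Longrightarrow> q = rot v3 p"
proof -
  assume "(p, q) \<in> consec_pairs fan"
  then obtain k where k: "Suc k < length fan" "fan ! k = p" "fan ! Suc k = q"
    by (auto simp: consec_pairs_iff)
  then have "fan = take k fan @ p # q # drop (Suc (Suc k)) fan"
    by (metis Cons_nth_drop_Suc Suc_lessD append_take_drop_id)
  moreover obtain zs where "ccw v3 v2 = fan @ zs"
    using ccw_v3 by blast
  ultimately show ?thesis
    using ccw_consecutive[of v3 v2 "take k fan" p q] adj_v3_fan by (metis append.assoc append_Cons list.set_intros(1))
qed

lemma v3_in_S: "v3 \<in> S"
  using nth_mem[of 2 C] long near_triangulationD(4)[OF near] by auto

lemma interior_closed: "x \<in> S - set C \<Longrightarrow> E x y \<Longrightarrow> y \<in> S"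
  using near_triangulationD(5)[OF near] .

lemma distinct_closing: "distinct closing"
  using distinct_drop[OF distinct_C] distinct_v123 by simp

lemma set_C: "set C = {v1, v2, v3} \<union> set rest"
  using arg_cong[OF C_eq, of set] by simp

lemma distinct_C_del: "distinct C_del"
  using distinct_v123 inner_disjoint distinct_fan distinct_drop[OF distinct_C, of 3] set_C by auto

lemma inner_in_fan_pairs:
  assumes x: "x \<in> set inner" and "(a, x) \<in> cyclic_pairs C_del" "(x, s) \<in> cyclic_pairs C_del"
  shows "(a, x) \<in> consec_pairs fan" "(x, s) \<in> consec_pairs fan"
proof -
  have "x \<noteq> v1" "x \<noteq> v2" "x \<notin> set closing"
    using x inner_disjoint set_C by auto
  then show "(a, x) \<in> consec_pairs fan" "(x, s) \<in> consec_pairs fan"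
    using assms(2,3) cyclic_pairs_C_del consec_pairs_in_set[of a x closing] consec_pairs_in_set[of x s closing]
    by auto
qed

lemma inner_interval:
  assumes x: "x \<in> set inner" and ax: "(a, x) \<in> cyclic_pairs C_del" and xs: "(x, s) \<in> cyclic_pairs C_del"
  obtains L where "ccw x a = L @ [v3]" "L \<noteq> []" "last L = s" "set L = nbrs_in S_del x"
proof -
  have ax': "(a, x) \<in> consec_pairs fan" and xs': "(x, s) \<in> consec_pairs fan"
    using inner_in_fan_pairs[OF assms] by blast+
  then have rx: "x = rot v3 a" and rs: "s = rot v3 x"
    using fan_rot by simp_all
  have Ea: "E v3 a" and Ex: "E v3 x"
    using adj_v3_fan consec_pairs_in_set[OF ax'] by simp_all
  have a: "rot x v3 = a"
    using rot_face[OF adj_sym[OF Ea]] rx by simp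
  obtain L where L: "ccw x (rot x v3) = L @ [v3]" "L \<noteq> []" "last L = s" "set L = nbrs E x - {v3}"
  proof (rule ccw_before[OF adj_sym[OF Ex]])
    show "E x s" "rot x s = v3"
      using adj_rot_across[OF Ex] rot_face[OF adj_sym[OF Ex]] rs by simp_all
    show "rot x v3 \<noteq> v3"
      using a Ea adj_irrefl by auto
  qed
  have "x \<in> S - set C"
    using x fan_subset inner_disjoint by auto
  then have "nbrs E x = nbrs_in S x"
    using interior_closed by (auto simp: nbrs_def nbrs_in_def)
  then show ?thesis
    using that L unfolding a nbrs_in_Diff by blast
qed

lemma pairs_at_nxt:
  assumes "(a, nxt) \<in> cyclic_pairs C_del"
  shows "rot nxt v3 = a"
proof -
  have "(a, nxt) \<notin> consec_pairs closing"
    using consec_pairs_snd_not_hd[OF distinct_closing] nxt_eq by auto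
  then have a: "(a, nxt) \<in> consec_pairs fan"
    using assms cyclic_pairs_C_del nxt_neq by auto
  have "nxt = rot v3 a" "E v3 a"
    using fan_rot[OF a] adj_v3_fan consec_pairs_in_set[OF a] by simp_all
  then show ?thesis
    using rot_face[OF adj_sym[OF \<open>E v3 a\<close>]] by simp
qed

lemma pairs_from_nxt:
  shows "(nxt, s) \<in> cyclic_pairs C_del \<Longrightarrow> (nxt, s) \<in> cyclic_pairs C"
    and "(nxt, s) \<in> cyclic_pairs C \<Longrightarrow> nxt \<noteq> v1 \<Longrightarrow> (nxt, s) \<in> cyclic_pairs C_del"
proof -
  have "(nxt, s) \<notin> consec_pairs fan"
    using consec_pairs_fst_not_last[OF distinct_fan] by force
  then show "(nxt, s) \<in> cyclic_pairs C_del \<Longrightarrow> (nxt, s) \<in> cyclic_pairs C"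
    and "(nxt, s) \<in> cyclic_pairs C \<Longrightarrow> nxt \<noteq> v1 \<Longrightarrow> (nxt, s) \<in> cyclic_pairs C_del"
    using cyclic_pairs_C cyclic_pairs_C_del nxt_neq by auto
qed

lemma pairs_at_v2:
  assumes "(a, v2) \<in> cyclic_pairs C_del" "(v2, s) \<in> cyclic_pairs C_del"
  shows "a = v1" "E v2 s" "rot v2 s = v3"
proof -
  show "a = v1"
    using cyclic_pairs_unique_fst[OF distinct_C_del assms(1)] cyclic_pairs_C_del by blast
  have "(v2, hd (inner @ [nxt])) \<in> consec_pairs fan"
    by (cases inner) auto
  then have "s = hd (inner @ [nxt])"
    using cyclic_pairs_unique_snd[OF distinct_C_del assms(2)] cyclic_pairs_C_del by blast
  then have "s = rot v3 v2"
    using fan_rot[OF \<open>(v2, hd (inner @ [nxt])) \<in> consec_pairs fan\<close>] by simp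
  moreover have "E v3 v2"
    using adj_v3_fan by simp
  ultimately show "E v2 s" "rot v2 s = v3"
    using adj_rot_across rot_face[of v2 v3] adj_sym by auto
qed

lemma pairs_off_fan:
  assumes "x \<notin> set fan" "x \<noteq> v3"
  shows "(a, x) \<in> cyclic_pairs C_del \<longleftrightarrow> (a, x) \<in> cyclic_pairs C"
    and "(x, s) \<in> cyclic_pairs C_del \<longleftrightarrow> (x, s) \<in> cyclic_pairs C"
proof -
  have "(a, x) \<notin> consec_pairs fan" "(x, s) \<notin> consec_pairs fan"
    using assms(1) consec_pairs_in_set by metis+
  then show "(a, x) \<in> cyclic_pairs C_del \<longleftrightarrow> (a, x) \<in> cyclic_pairs C"
    and "(x, s) \<in> cyclic_pairs C_del \<longleftrightarrow> (x, s) \<in> cyclic_pairs C"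
    using assms cyclic_pairs_C cyclic_pairs_C_del by auto
qed

lemma v3_notin_fan: "v3 \<notin> set fan"
  using adj_v3_fan adj_irrefl by blast

lemma set_fan_subset: "set fan \<subseteq> set C_del"
  using nxt_in_closing by auto

lemma near_triangulation_delete: "near_triangulation S_del C_del"
proof -
  note nt = near_triangulationD[OF near]
  have sub: "set C_del \<subseteq> S_del"
    using nt(4) set_C fan_subset v3_notin_fan distinct_v123 by auto
  have closed: "y \<in> S_del" if x: "x \<in> S_del - set C_del" and xy: "E x y" for x y
  proof -
    have "x \<notin> set C"
      using x set_C by auto
    then have "y \<in> S"
      using x xy nt(5) by blast
    moreover have "y \<noteq> v3"
    proof
      assume "y = v3"
      then have "x \<in> nbrs_in S v3"
        using x adj_sym[OF xy] by (simp add: nbrs_in_def)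
      then have "x \<in> set fan"
        using set_fan by simp
      then show False
        using x set_fan_subset by auto
    qed
    ultimately show ?thesis
      by simp
  qed
  have interval: "ccw_interval S_del x a s"
    if ax: "(a, x) \<in> cyclic_pairs C_del" and xs: "(x, s) \<in> cyclic_pairs C_del" for a x s
  proof -
    have xC: "x \<in> set C_del"
      using cyclic_pairs_in_set[OF ax] by simp
    consider "x \<in> set inner" | "x = nxt" | "x = v2" | "x \<notin> set fan"
      by auto
    then show ?thesis
    proof cases
      case 1
      obtain L where "ccw x a = L @ [v3]" "L \<noteq> []" "last L = s" "set L = nbrs_in S_del x"
        using inner_interval[OF 1 ax xs] .
      then show ?thesis
        unfolding ccw_interval_def by blast
    next
      case 2
      have "(nxt, s) \<in> cyclic_pairs C"
        using pairs_from_nxt(1) xs 2 by simp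
      then have "ccw_interval S nxt v3 s"
        using nt(6) cyclic_pairs_C by blast
      moreover have "s \<noteq> v3"
        using cyclic_pairs_in_set[OF xs] sub by auto
      ultimately have "ccw_interval S_del nxt (rot nxt v3) s"
        by (rule ccw_interval_drop_first)
      then show ?thesis
        using pairs_at_nxt[OF ax[unfolded 2]] 2 by simp
    next
      case 3
      have "ccw_interval S v2 v1 v3"
        using nt(6) cyclic_pairs_C by blast
      moreover note v2 = pairs_at_v2[OF ax[unfolded 3] xs[unfolded 3]]
      ultimately have "ccw_interval S_del v2 v1 s"
        using ccw_interval_drop_last distinct_v123(2) by simp
      then show ?thesis
        using v2 3 by simp
    next
      case 4
      have xv: "x \<noteq> v3"
        using xC sub by auto
      then have "ccw_interval S x a s"
        using nt(6) pairs_off_fan[OF 4 xv] ax xs by blast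
      moreover have "x \<notin> nbrs_in S v3"
        unfolding set_fan[symmetric] using 4 .
      then have "\<not> E v3 x"
        using xC sub by (auto simp: nbrs_in_def)
      then have "\<not> E x v3"
        using adj_sym by blast
      then have "nbrs_in S_del x = nbrs_in S x"
        by (auto simp: nbrs_in_def)
      ultimately show ?thesis
        by (simp add: ccw_interval_def)
    qed
  qed
  show ?thesis
    by (rule near_triangulationI[OF _ distinct_C_del _ sub closed interval]) (use nt(1) in auto)
qed

end

locale chordless_labelled = chordless_step +
  fixes R' green' t'
  assumes labelled: "schnyder_labelling S_del C_del R' green' t'"
begin

abbreviation "R_new \<equiv> orient_labels E S C \<union> R'"

text \<open>The edges into v3 from v2 and from the vertex after v3 are its green and blue incoming edges.\<close>

definition green :: "'a \<Rightarrow> 'a \<Rightarrow> bool" where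
  "green u w \<longleftrightarrow> (if w = v3 then u = v2 else green' u w)"

definition potential :: "'a \<Rightarrow> nat" where
  "potential x = (if x = v3 then 0 else Suc (t' x))"

lemma C_del_nth: "C_del ! 0 = v1" "C_del ! 1 = v2"
  by simp_all

lemmas old = schnyder_labellingD[OF labelled, unfolded C_del_nth]

lemma orient_labels_iff [simp]:
  "(p, q, k) \<in> orient_labels E S C \<longleftrightarrow>
     (q = v3 \<and> k = 1 \<and> (p = v2 \<or> p = nxt)) \<or> (p = v3 \<and> k = 2 \<and> q \<in> set inner)"
proof -
  have "u \<in> S \<and> E v3 u \<longleftrightarrow> u \<in> set fan" for u
    using set_fan by (simp add: nbrs_in_def)
  moreover have "q \<in> set fan \<and> q \<noteq> v2 \<and> q \<noteq> nxt \<longleftrightarrow> q \<in> set inner"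
    using distinct_fan by auto
  ultimately show ?thesis
    unfolding orient_labels_def by auto
qed

lemma old_avoids_v3: "(u, w, k) \<in> R' \<Longrightarrow> u \<noteq> v3 \<and> w \<noteq> v3"
  using old(1) by blast

lemma adj_v3_iff: "y \<in> S \<Longrightarrow> E y v3 \<longleftrightarrow> y \<in> set fan"
  using set_fan adj_sym unfolding nbrs_in_def by blast

lemma new_wellformed:
  assumes "(u, w, k) \<in> R_new"
  shows "E u w \<and> u \<in> S \<and> w \<in> S \<and> {u, w} \<noteq> {v1, v2} \<and> (k = 1 \<or> k = 2)"
proof (cases "(u, w, k) \<in> orient_labels E S C")
  case True
  then consider "w = v3" "k = 1" "u \<in> set fan" | "u = v3" "k = 2" "w \<in> set fan"
    unfolding orient_labels_iff by auto
  then show ?thesis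
  proof cases
    case 1
    then show ?thesis
      using adj_sym[OF adj_v3_fan[of u]] fan_subset v3_in_S distinct_v123 by (auto simp: doubleton_eq_iff)
  next
    case 2
    then show ?thesis
      using adj_v3_fan[of w] fan_subset v3_in_S distinct_v123 by (auto simp: doubleton_eq_iff)
  qed
next
  case False
  then show ?thesis
    using assms old(1)[of u w k] by auto
qed

lemma fan_iff_adj_v3: "y \<in> S \<Longrightarrow> E v3 y \<longleftrightarrow> y \<in> set fan"
  using set_fan by (auto simp: nbrs_in_def)

lemma fan_cases: "y \<in> set fan \<Longrightarrow> y = v2 \<or> y = nxt \<or> y \<in> set inner"
  by auto

lemma new_complete:
  assumes "E u w" "u \<in> S" "w \<in> S" "{u, w} \<noteq> {v1, v2}"
  shows "\<exists>k. (u, w, k) \<in> R_new \<or> (w, u, k) \<in> R_new"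
proof -
  have at_v3: "\<exists>k. (y, v3, k) \<in> R_new \<or> (v3, y, k) \<in> R_new" if "y \<in> S" "E v3 y" for y
    using fan_cases[of y] fan_iff_adj_v3[OF that(1)] that(2) by auto
  show ?thesis
  proof (cases "u = v3 \<or> w = v3")
    case True
    then show ?thesis
      using at_v3[of w] at_v3[of u] assms(1-3) adj_sym[OF assms(1)] by blast
  next
    case False
    then show ?thesis
      using old(2)[OF assms(1)] assms(2-4) by auto
  qed
qed

lemma new_unique:
  assumes "(u, w, k) \<in> R_new" "(u', w', k') \<in> R_new" "{u, w} = {u', w'}"
  shows "u = u' \<and> w = w' \<and> k = k'"
proof (cases "(u, w, k) \<in> R'")
  case True
  have "(u', w', k') \<notin> orient_labels E S C"
    using old_avoids_v3[OF True] assms(3) by (auto simp: doubleton_eq_iff)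
  then show ?thesis
    using old(3)[OF True] assms(2,3) by blast
next
  case False
  then have new: "(u, w, k) \<in> orient_labels E S C"
    using assms(1) by blast
  then have "v3 \<in> {u', w'}"
    using assms(3) by auto
  then have "(u', w', k') \<notin> R'"
    using old_avoids_v3[of u' w' k'] by auto
  then have "(u', w', k') \<in> orient_labels E S C"
    using assms(2) by blast
  moreover have "v2 \<notin> set inner" "nxt \<notin> set inner" "v3 \<notin> set inner"
    using distinct_fan v3_notin_fan by auto
  ultimately show ?thesis
    using new assms(3) nxt_neq distinct_v123(3) by (auto simp: doubleton_eq_iff)
qed

lemma v1_adj_v3:
  assumes "E v1 v3"
  shows "v1 = nxt"
proof -
  have "v1 \<in> S"
    using near_triangulationD(4)[OF near] set_C by auto
  then have "v1 \<in> set fan"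
    using fan_iff_adj_v3 adj_sym[OF assms] by blast
  then show ?thesis
    using inner_disjoint set_C distinct_v123(1) by auto
qed

lemma new_at_v1:
  assumes "w \<in> S" "E v1 w" "w \<noteq> v2"
  shows "(v1, w, 1) \<in> R_new \<and> \<not> green v1 w"
proof (cases "w = v3")
  case True
  then show ?thesis
    using v1_adj_v3 assms(2) distinct_v123 by (auto simp: green_def)
next
  case False
  then show ?thesis
    using old(4)[of w] assms by (auto simp: green_def)
qed

lemma new_at_v2:
  assumes "w \<in> S" "E v2 w" "w \<noteq> v1"
  shows "(v2, w, 1) \<in> R_new \<and> green v2 w"
proof (cases "w = v3")
  case True
  then show ?thesis
    by (simp add: green_def)
next
  case False
  then show ?thesis
    using old(5)[of w] assms by (auto simp: green_def)
qed

lemma new_potential: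
  assumes "(u, w, 2) \<in> R_new"
  shows "potential u < potential w"
proof (cases "(u, w, 2) \<in> R'")
  case True
  then show ?thesis
    using old(6) old_avoids_v3 by (simp add: potential_def)
next
  case False
  then have "u = v3" "w \<in> set inner"
    using assms by auto
  then show ?thesis
    using v3_notin_fan by (auto simp: potential_def)
qed

lemma green_away_from_v3: "x \<noteq> v3 \<Longrightarrow> y \<noteq> v3 \<Longrightarrow> green x y = green' x y \<and> green y x = green' y x"
  by (simp add: green_def)

lemma old_subset_new: "R' \<subseteq> R_new"
  by blast

lemma old_edges: "\<forall>u w k. (u, w, k) \<in> R' \<longrightarrow> E u w"
  using old(1) by blast

lemma new_schnyder_vertex:
  assumes x: "x \<in> S - {v1, v2}" "x \<notin> set C"
  shows "schnyder_vertex R_new green x"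
proof -
  have xv: "x \<noteq> v3"
    using x set_C by auto
  show ?thesis
  proof (cases "x \<in> set C_del")
    case False
    have "\<not> E x v3"
    proof
      assume "E x v3"
      then have "x \<in> set fan"
        using fan_iff_adj_v3[of x] adj_sym x(1) by blast
      then show False
        using False set_fan_subset by blast
    qed
    then have "\<forall>y. E x y \<longrightarrow> green x y = green' x y \<and> green y x = green' y x"
      using green_away_from_v3 xv by metis
    moreover have "schnyder_vertex R' green' x"
      using old(7) x xv False by simp
    ultimately show ?thesis
      using schnyder_vertex_mono[OF _ old_subset_new _ old_edges] by blast
  next
    case True
    then have xi: "x \<in> set inner"
      using x set_C by auto
    then obtain t1 t2 where t: "inner = t1 @ x # t2"
      by (meson split_list)
    define a s where "a = last (v2 # t1)" and "s = hd (t2 @ [nxt])"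
    have "(a, x) \<in> consec_pairs fan" "(x, s) \<in> consec_pairs fan"
      using consec_pairs_around[of "v2 # t1" "t2 @ [nxt]" x] t by (simp_all add: a_def s_def)
    then have ax: "(a, x) \<in> cyclic_pairs C_del" and xs: "(x, s) \<in> cyclic_pairs C_del"
      using cyclic_pairs_C_del by auto
    obtain L where L: "ccw x a = L @ [v3]" "L \<noteq> []" "last L = s" "set L = nbrs_in S_del x"
      using inner_interval[OF xi ax xs] .
    have seg: "schnyder_segment S_del R' green' x a s"
      using old(8)[of x a s] x xv ax xs by simp
    obtain Bo g Ro b Go zs where M: "ccw x a = (Bo @ g # Ro @ b # Go) @ zs"
      "last (Bo @ g # Ro @ b # Go) = s" "set (Bo @ g # Ro @ b # Go) = nbrs_in S_del x"
      "schnyder_labels R' green' x Bo g Ro b Go"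
      using seg unfolding schnyder_segment_def by blast
    have xa: "E x a"
      using schnyder_segment_adj[OF seg] .
    have "Bo @ g # Ro @ b # Go = L"
      using distinct_prefix_eq_by_last[of "Bo @ g # Ro @ b # Go" zs L "[v3]"] M L distinct_ccw[OF xa] by auto
    then have "ccw x v3 = v3 # Bo @ g # Ro @ b # Go"
      using ccw_rotate_split[OF xa, of "Bo @ g # Ro @ b # Go" v3 "[]"] L(1) by simp
    moreover have "schnyder_labels R_new green x Bo g Ro b Go"
      using schnyder_labels_mono[OF M(4) old_subset_new] green_away_from_v3 xv M(3)
      by (auto simp: nbrs_in_def)
    moreover have "(v3, x, 2) \<in> R_new"
      using xi by simp
    ultimately show ?thesis
      unfolding schnyder_vertex_def schnyder_rotation_def by blast
  qed
qed

lemma new_segment_v3: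
  assumes "(a, v3) \<in> cyclic_pairs C" "(v3, s) \<in> cyclic_pairs C"
  shows "schnyder_segment S R_new green v3 a s"
proof -
  have "a = v2" "s = nxt"
    using cyclic_pairs_unique_fst[OF distinct_C assms(1)] cyclic_pairs_unique_snd[OF distinct_C assms(2)]
      cyclic_pairs_C by auto
  moreover obtain zs where "ccw v3 v2 = ([] @ v2 # inner @ nxt # []) @ zs"
    using ccw_v3 by auto
  moreover have "schnyder_labels R_new green v3 [] v2 inner nxt []"
    using nxt_neq by (auto simp: schnyder_labels_def green_def)
  moreover have "last ([] @ v2 # inner @ nxt # []) = nxt" "set ([] @ v2 # inner @ nxt # []) = nbrs_in S v3"
    using set_fan by simp_all
  ultimately show ?thesis
    unfolding schnyder_segment_def by blast
qed

lemma new_segment_nxt: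
  assumes x: "nxt \<in> S - {v1, v2}" "nxt \<noteq> v3"
    and ax: "(a, nxt) \<in> cyclic_pairs C" and xs: "(nxt, s) \<in> cyclic_pairs C"
  shows "schnyder_segment S R_new green nxt a s"
proof -
  have "a = v3"
    using cyclic_pairs_unique_fst[OF distinct_C ax] cyclic_pairs_C by auto
  have xs': "(nxt, s) \<in> cyclic_pairs C_del"
    using pairs_from_nxt(2)[OF xs] x by auto
  define a' where "a' = last (v2 # inner)"
  have "(a', nxt) \<in> consec_pairs fan"
    using consec_pairs_last[of "v2 # inner" nxt] by (simp add: a'_def)
  then have ax': "(a', nxt) \<in> cyclic_pairs C_del"
    using cyclic_pairs_C_del by auto
  have "schnyder_segment S_del R' green' nxt a' s"
    using old(8)[OF _ ax' xs'] x by blast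
  then obtain Bo g Ro b Go zs where M: "ccw nxt a' = (Bo @ g # Ro @ b # Go) @ zs"
    "last (Bo @ g # Ro @ b # Go) = s" "set (Bo @ g # Ro @ b # Go) = nbrs_in S_del nxt"
    "schnyder_labels R' green' nxt Bo g Ro b Go"
    unfolding schnyder_segment_def by blast
  have v3M: "v3 \<notin> set (Bo @ g # Ro @ b # Go)"
    using M(3) by (simp add: nbrs_in_def)
  have E: "E nxt v3"
    using adj_sym[OF adj_v3_fan[of nxt]] by simp
  have "ccw nxt (rot nxt v3) = (Bo @ g # Ro @ b # Go) @ zs"
    using M(1) pairs_at_nxt[OF ax'] by simp
  then obtain zs' where "ccw nxt v3 = ((v3 # Bo) @ g # Ro @ b # Go) @ zs'"
    using ccw_rot_prefix[OF E _ v3M] by auto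
  moreover have "schnyder_labels R_new green nxt (v3 # Bo) g Ro b Go"
  proof -
    have "\<forall>y \<in> set (Bo @ g # Ro @ b # Go). green nxt y = green' nxt y \<and> green y nxt = green' y nxt"
    proof
      fix y assume "y \<in> set (Bo @ g # Ro @ b # Go)"
      then have "y \<noteq> v3"
        using v3M by blast
      then show "green nxt y = green' nxt y \<and> green y nxt = green' y nxt"
        by (rule green_away_from_v3[OF x(2)])
    qed
    then have "schnyder_labels R_new green nxt Bo g Ro b Go"
      using schnyder_labels_mono[OF M(4) old_subset_new] by blast
    moreover have "\<forall>y \<in> set [v3]. (nxt, y, 1) \<in> R_new \<and> \<not> green nxt y"
      using nxt_neq by (simp add: green_def)
    ultimately have "schnyder_labels R_new green nxt ([v3] @ Bo) g Ro b Go"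
      by (rule schnyder_labels_append_blue)
    then show ?thesis
      by simp
  qed
  moreover have "nbrs_in S nxt = insert v3 (nbrs_in S_del nxt)"
    using E v3_in_S by (auto simp: nbrs_in_def)
  then have "set ((v3 # Bo) @ g # Ro @ b # Go) = nbrs_in S nxt"
    using M(3) by simp
  moreover have "last ((v3 # Bo) @ g # Ro @ b # Go) = s"
    using M(2) by simp
  ultimately show ?thesis
    unfolding schnyder_segment_def \<open>a = v3\<close> by blast
qed

lemma new_segment_other:
  assumes x: "x \<in> S - {v1, v2}" "x \<noteq> v3" "x \<noteq> nxt"
    and ax: "(a, x) \<in> cyclic_pairs C" and xs: "(x, s) \<in> cyclic_pairs C"
  shows "schnyder_segment S R_new green x a s"
proof -
  have xC: "x \<in> set C"
    using cyclic_pairs_in_set[OF ax] by simp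
  then have "x \<notin> set fan"
    using inner_disjoint x by auto
  then have "(a, x) \<in> cyclic_pairs C_del" "(x, s) \<in> cyclic_pairs C_del"
    using pairs_off_fan x(2) ax xs by blast+
  then have seg: "schnyder_segment S_del R' green' x a s"
    using old(8) x by simp
  have "\<not> E v3 x"
    using chordless_adj_v3[OF long chordless xC] x by auto
  then have "\<not> E x v3"
    using adj_sym by blast
  then have "nbrs_in S_del x = nbrs_in S x"
    by (auto simp: nbrs_in_def)
  moreover have "\<forall>y \<in> nbrs_in S_del x. green x y = green' x y \<and> green y x = green' y x"
    using green_away_from_v3 x(2) by (simp add: nbrs_in_def)
  ultimately show ?thesis
    using schnyder_segment_mono[OF seg old_subset_new] by blast
qed

lemma new_segment:
  assumes x: "x \<in> S - {v1, v2}" and ax: "(a, x) \<in> cyclic_pairs C" and xs: "(x, s) \<in> cyclic_pairs C"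
  shows "schnyder_segment S R_new green x a s"
proof -
  consider "x = v3" | "x \<noteq> v3" "x = nxt" | "x \<noteq> v3" "x \<noteq> nxt"
    by blast
  then show ?thesis
  proof cases
    case 1
    then show ?thesis
      using new_segment_v3 ax xs by blast
  next
    case 2
    then show ?thesis
      using new_segment_nxt x ax xs by blast
  next
    case 3
    then show ?thesis
      using new_segment_other x ax xs by blast
  qed
qed

lemma new_labelling: "schnyder_labelling S C R_new green potential"
  by (rule schnyder_labellingI[OF new_wellformed new_complete new_unique new_at_v1 new_at_v2
        new_potential new_schnyder_vertex new_segment])

end

context chordless_step
begin

lemma schnyder_labelling_delete:
  assumes "schnyder_labelling S_del C_del R' green' t'"
  shows "\<exists>green t. schnyder_labelling S C (orient_labels E S C \<union> R') green t"
proof -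
  interpret chordless_labelled V E rot S C R' green' t'
    by unfold_locales (fact assms)
  show ?thesis
    using new_labelling by blast
qed

end

context plane_triangulation
begin

text \<open>Consecutive neighbours of x are adjacent, so a ccw interval of neighbours is a path; it starts
  on the A-side of the chord xc and can reach the B-side only through c.\<close>

lemma ccw_interval_split_at_chord:
  assumes iv: "ccw_interval S x a s" and c: "c \<in> nbrs_in S x"
    and U: "SA \<union> SB = S" and I: "SA \<inter> SB = {x, c}"
    and no_cross: "\<forall>p\<in>SA - {x, c}. \<forall>q\<in>SB - {x, c}. \<not> E p q"
    and a: "a \<in> SA - {x, c}" and s: "s \<in> SB - {x, c}"
  obtains P Q zs where "ccw x a = P @ c # Q @ zs" "P \<noteq> []" "Q \<noteq> []"
    "set P \<subseteq> SA - {x, c}" "set Q \<subseteq> SB - {x, c}" "last Q = s" "set (P @ c # Q) = nbrs_in S x"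
proof -
  obtain ys zs where ys: "ccw x a = ys @ zs" "ys \<noteq> []" "last ys = s" "set ys = nbrs_in S x"
    using iv by (auto simp: ccw_interval_def)
  have xa: "E x a"
    using ccw_interval_adj[OF iv] .
  have dys: "distinct ys"
    using distinct_ccw[OF xa] ys(1) by simp
  have path: "successively E ys"
    using successively_ccw[OF xa] ys(1) by (simp add: successively_append_iff)
  have hd: "hd ys = a"
    using ccw_Cons[OF xa] ys(1,2) by (cases ys) auto
  obtain P Q where PQ: "ys = P @ c # Q"
    using c ys(4) by (metis split_list)
  have sides: "set P \<union> set Q \<subseteq> (SA - {x, c}) \<union> (SB - {x, c})"
    using ys(4) PQ dys U adj_irrefl by (auto simp: nbrs_in_def)
  have "P \<noteq> []"
    using hd PQ a by auto
  moreover have "set P \<subseteq> SA - {x, c}"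
  proof (rule successively_stays_in_side[OF _ _ no_cross \<open>P \<noteq> []\<close>])
    show "successively E P"
      using path PQ by (simp add: successively_append_iff)
    show "hd P \<in> SA - {x, c}"
      using hd PQ a \<open>P \<noteq> []\<close> by simp
  qed (use sides in auto)
  moreover have "Q \<noteq> []"
    using ys(3) PQ s by auto
  moreover have "set (rev Q) \<subseteq> SB - {x, c}"
  proof (rule successively_stays_in_side)
    have "successively E Q"
      using path PQ by (auto simp: successively_append_iff successively_Cons)
    then have "successively (\<lambda>p q. E q p) Q"
      by (rule successively_mono) (rule adj_sym)
    then show "successively E (rev Q)"
      by simp
    show "\<forall>p\<in>SB - {x, c}. \<forall>q\<in>SA - {x, c}. \<not> E p q"
      using no_cross adj_sym by blast
    show "hd (rev Q) \<in> SB - {x, c}"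
      using ys(3) PQ s \<open>Q \<noteq> []\<close> by (simp add: hd_rev)
    show "set (rev Q) \<subseteq> (SB - {x, c}) \<union> (SA - {x, c})" "rev Q \<noteq> []"
      using sides \<open>Q \<noteq> []\<close> by auto
  qed
  ultimately show ?thesis
    using that[of P Q zs] ys PQ by auto
qed

lemma ccw_interval_split_parts:
  assumes ccw: "ccw x a = P @ c # Q @ zs" and "P \<noteq> []" "Q \<noteq> []"
    and P: "set P \<subseteq> SA - {x, c}" and Q: "set Q \<subseteq> SB - {x, c}" and "last Q = s"
    and nbrs: "set (P @ c # Q) = nbrs_in S x" and U: "SA \<union> SB = S" and I: "SA \<inter> SB = {x, c}"
  shows "ccw_interval SA x a c" "ccw_interval SB x c s"
proof -
  have A: "nbrs_in SA x = set (P @ [c])" and B: "nbrs_in SB x = set (c # Q)"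
    using nbrs P Q U I by (auto simp: nbrs_in_def)
  show "ccw_interval SA x a c"
    unfolding ccw_interval_def using ccw A by (intro exI[of _ "P @ [c]"] exI[of _ "Q @ zs"]) simp
  have "E x a"
    using ccw nbrs \<open>P \<noteq> []\<close> hd_ccw[of x a] by (cases P) (auto simp: nbrs_in_def)
  then have "ccw x c = c # (Q @ zs) @ P"
    using ccw_rotate_split[of x a P c "Q @ zs"] ccw by simp
  then show "ccw_interval SB x c s"
    unfolding ccw_interval_def using B \<open>Q \<noteq> []\<close> \<open>last Q = s\<close>
    by (intro exI[of _ "c # Q"] exI[of _ "zs @ P"]) simp
qed

lemma schnyder_segment_extend_green:
  assumes seg: "schnyder_segment S1 R green x a c" and ccw: "ccw x a = P @ c # Q @ zs"
    and nbrs: "set (P @ c # Q) = nbrs_in S x" and "Q \<noteq> []" "last Q = s"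
    and Q: "\<forall>y\<in>set Q. (x, y, 1) \<in> R \<and> green x y"
  shows "schnyder_segment S R green x a s"
proof -
  obtain Bo g Ro b Go zs1 where M: "ccw x a = (Bo @ g # Ro @ b # Go) @ zs1"
    "last (Bo @ g # Ro @ b # Go) = c" "schnyder_labels R green x Bo g Ro b Go"
    using seg unfolding schnyder_segment_def by blast
  have eq: "Bo @ g # Ro @ b # Go = P @ [c]"
    using distinct_prefix_eq_by_last[of "Bo @ g # Ro @ b # Go" zs1 "P @ [c]" "Q @ zs"] M ccw
      distinct_ccw[OF schnyder_segment_adj[OF seg]] by auto
  have "ccw x a = ((Bo @ g # Ro @ b # Go) @ Q) @ zs" "set ((Bo @ g # Ro @ b # Go) @ Q) = nbrs_in S x"
    unfolding eq using ccw nbrs by simp_all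
  then have "ccw x a = (Bo @ g # Ro @ b # Go @ Q) @ zs" "set (Bo @ g # Ro @ b # Go @ Q) = nbrs_in S x"
    by simp_all
  moreover have "last (Bo @ g # Ro @ b # Go @ Q) = s"
    using \<open>Q \<noteq> []\<close> \<open>last Q = s\<close> by simp
  moreover have "schnyder_labels R green x Bo g Ro b (Go @ Q)"
    using schnyder_labels_append_green[OF M(3) Q] .
  ultimately show ?thesis
    unfolding schnyder_segment_def by blast
qed

lemma schnyder_segment_extend_blue:
  assumes seg: "schnyder_segment S1 R green x c s" and ccw: "ccw x a = P @ c # Q @ zs"
    and nbrs: "set (P @ c # Q) = nbrs_in S x" and "last (c # Q) = s"
    and P: "\<forall>y\<in>set P. (x, y, 1) \<in> R \<and> \<not> green x y" and xa: "E x a"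
  shows "schnyder_segment S R green x a s"
proof -
  have ccw_c: "ccw x c = (c # Q) @ (zs @ P)"
    using ccw_rotate_split[OF xa ccw] by simp
  obtain Bo g Ro b Go zs1 where M: "ccw x c = (Bo @ g # Ro @ b # Go) @ zs1"
    "last (Bo @ g # Ro @ b # Go) = s" "schnyder_labels R green x Bo g Ro b Go"
    using seg unfolding schnyder_segment_def by blast
  have eq: "Bo @ g # Ro @ b # Go = c # Q"
    using distinct_prefix_eq_by_last[of "Bo @ g # Ro @ b # Go" zs1 "c # Q" "zs @ P"] M ccw_c
      distinct_ccw[OF schnyder_segment_adj[OF seg]] \<open>last (c # Q) = s\<close> by auto
  have "ccw x a = (P @ (Bo @ g # Ro @ b # Go)) @ zs" "set (P @ (Bo @ g # Ro @ b # Go)) = nbrs_in S x"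
    unfolding eq using ccw nbrs by simp_all
  then have "ccw x a = ((P @ Bo) @ g # Ro @ b # Go) @ zs" "set ((P @ Bo) @ g # Ro @ b # Go) = nbrs_in S x"
    by simp_all
  moreover have "last ((P @ Bo) @ g # Ro @ b # Go) = s"
    using M(2) by simp
  moreover have "schnyder_labels R green x (P @ Bo) g Ro b Go"
    using schnyder_labels_append_blue[OF M(3) P] .
  ultimately show ?thesis
    unfolding schnyder_segment_def by blast
qed

end

text \<open>A chord ci cj splits the near triangulation (S, C) into (SY, CY) and (SW, CW): going
  clockwise, C runs from ci through Y to cj and from cj through W back to ci; CY and CW close
  these paths with the chord.\<close>

locale chord_split = plane_triangulation +
  fixes S C ci cj Y W SY SW CY CW
  assumes near: "near_triangulation S C"
    and cyclic_pairs_C: "cyclic_pairs C = consec_pairs (ci # Y @ [cj]) \<union> consec_pairs (cj # W @ [ci])"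
    and cyclic_pairs_CY: "cyclic_pairs CY = consec_pairs (ci # Y @ [cj]) \<union> {(cj, ci)}"
    and cyclic_pairs_CW: "cyclic_pairs CW = consec_pairs (cj # W @ [ci]) \<union> {(ci, cj)}"
    and set_C: "set C = {ci, cj} \<union> set Y \<union> set W"
    and set_CY: "set CY = {ci, cj} \<union> set Y"
    and set_CW: "set CW = {ci, cj} \<union> set W"
    and distinct: "distinct (ci # cj # Y @ W)" "distinct CY" "distinct CW"
    and nonempty: "Y \<noteq> []" "W \<noteq> []" "2 \<le> length CY" "2 \<le> length CW"
    and union: "SY \<union> SW = S" and inter: "SY \<inter> SW = {ci, cj}"
    and CY_sub: "set CY \<subseteq> SY" and CW_sub: "set CW \<subseteq> SW"
    and no_cross: "\<forall>p\<in>SY - {ci, cj}. \<forall>q\<in>SW - {ci, cj}. \<not> E p q"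
    and chord: "E ci cj"
begin

lemma swap: "chord_split V E rot S C cj ci W Y SW SY CW CY"
proof -
  have "\<forall>p\<in>SW - {cj, ci}. \<forall>q\<in>SY - {cj, ci}. \<not> E p q"
    using no_cross adj_sym by blast
  moreover have "distinct (cj # ci # W @ Y)"
    using distinct(1) by auto
  ultimately show ?thesis
    using near cyclic_pairs_C cyclic_pairs_CY cyclic_pairs_CW set_C set_CY set_CW distinct(2,3) nonempty
      union inter CY_sub CW_sub adj_sym[OF chord]
    by unfold_locales (auto simp: insert_commute Un_ac)
qed

lemma Y_side: "set Y \<subseteq> SY - {ci, cj}" and W_side: "set W \<subseteq> SW - {ci, cj}"
  using set_CY CY_sub set_CW CW_sub distinct(1) by auto

lemma pairs_at_ci: "(last W, ci) \<in> cyclic_pairs C" "(ci, hd Y) \<in> cyclic_pairs C"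
    "(last W, ci) \<in> cyclic_pairs CW" "(ci, hd Y) \<in> cyclic_pairs CY"
proof -
  have "(last W, ci) \<in> consec_pairs (cj # W @ [ci])"
    using consec_pairs_last[of "cj # W" ci] nonempty(2) by simp
  moreover have "(ci, hd Y) \<in> consec_pairs (ci # Y @ [cj])"
    using nonempty(1) by (cases Y) auto
  ultimately show "(last W, ci) \<in> cyclic_pairs C" "(ci, hd Y) \<in> cyclic_pairs C"
    "(last W, ci) \<in> cyclic_pairs CW" "(ci, hd Y) \<in> cyclic_pairs CY"
    unfolding cyclic_pairs_C cyclic_pairs_CY cyclic_pairs_CW by blast+
qed

lemma ccw_split_at_ci:
  obtains P Q zs where "ccw ci (last W) = P @ cj # Q @ zs" "P \<noteq> []" "Q \<noteq> []"
    "set P \<subseteq> SW - {ci, cj}" "set Q \<subseteq> SY - {ci, cj}" "last Q = hd Y" "set (P @ cj # Q) = nbrs_in S ci"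
proof (rule ccw_interval_split_at_chord)
  show "ccw_interval S ci (last W) (hd Y)"
    using near_triangulationD(6)[OF near pairs_at_ci(1,2)] .
  show "cj \<in> nbrs_in S ci"
    using chord set_C near_triangulationD(4)[OF near] by (auto simp: nbrs_in_def)
  show "SW \<union> SY = S" "SW \<inter> SY = {ci, cj}"
    using union inter by auto
  show "\<forall>p\<in>SW - {ci, cj}. \<forall>q\<in>SY - {ci, cj}. \<not> E p q"
    using no_cross adj_sym by blast
  have "last W \<in> set W" "hd Y \<in> set Y"
    using nonempty by simp_all
  then show "last W \<in> SW - {ci, cj}" "hd Y \<in> SY - {ci, cj}"
    using W_side Y_side by blast+
qed

lemma intervals_at_ci: "ccw_interval SW ci (last W) cj" "ccw_interval SY ci cj (hd Y)"
proof -
  obtain P Q zs where D: "ccw ci (last W) = P @ cj # Q @ zs" "P \<noteq> []" "Q \<noteq> []"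
    "set P \<subseteq> SW - {ci, cj}" "set Q \<subseteq> SY - {ci, cj}" "last Q = hd Y" "set (P @ cj # Q) = nbrs_in S ci"
    by (rule ccw_split_at_ci)
  have "SW \<union> SY = S" "SW \<inter> SY = {ci, cj}"
    using union inter by auto
  then show "ccw_interval SW ci (last W) cj" "ccw_interval SY ci cj (hd Y)"
    using ccw_interval_split_parts[OF D] by blast+
qed

lemma pairs_away_from_chord:
  assumes "x \<notin> {ci, cj}" "x \<in> SY"
  shows "(a, x) \<in> cyclic_pairs C \<longleftrightarrow> (a, x) \<in> cyclic_pairs CY"
    and "(x, a) \<in> cyclic_pairs C \<longleftrightarrow> (x, a) \<in> cyclic_pairs CY"
proof -
  have "x \<notin> set (cj # W @ [ci])"
    using assms W_side inter by auto
  then have "(a, x) \<notin> consec_pairs (cj # W @ [ci])" "(x, a) \<notin> consec_pairs (cj # W @ [ci])"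
    using consec_pairs_in_set by metis+
  then show "(a, x) \<in> cyclic_pairs C \<longleftrightarrow> (a, x) \<in> cyclic_pairs CY"
    and "(x, a) \<in> cyclic_pairs C \<longleftrightarrow> (x, a) \<in> cyclic_pairs CY"
    unfolding cyclic_pairs_C cyclic_pairs_CY using assms(1) by auto
qed

lemma nbrs_in_side: "x \<in> SY - {ci, cj} \<Longrightarrow> nbrs_in SY x = nbrs_in S x"
  using no_cross union inter unfolding nbrs_in_def by blast

lemma chord_pairs: "(ci, cj) \<in> cyclic_pairs CW" "(cj, ci) \<in> cyclic_pairs CY"
  using cyclic_pairs_CW cyclic_pairs_CY by blast+

lemma chord_end_split:
  assumes "(a, ci) \<in> cyclic_pairs C" "(ci, s) \<in> cyclic_pairs C"
  obtains P Q zs where "ccw ci a = P @ cj # Q @ zs" "P \<noteq> []" "Q \<noteq> []"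
    "set P \<subseteq> SW - {ci, cj}" "set Q \<subseteq> SY - {ci, cj}" "last Q = s" "set (P @ cj # Q) = nbrs_in S ci"
    "(a, ci) \<in> cyclic_pairs CW" "(ci, s) \<in> cyclic_pairs CY"
proof -
  have "a = last W" "s = hd Y"
    using cyclic_pairs_unique_fst[OF near_triangulationD(2)[OF near] assms(1) pairs_at_ci(1)]
      cyclic_pairs_unique_snd[OF near_triangulationD(2)[OF near] assms(2) pairs_at_ci(2)] by simp_all
  then show ?thesis
    using that ccw_split_at_ci pairs_at_ci(3,4) by metis
qed

end

context chord_split
begin

lemma near_triangulation_side: "near_triangulation SY CY"
proof (rule near_triangulationI)
  interpret swapped: chord_split V E rot S C cj ci W Y SW SY CW CY
    by (rule swap)
  note nt = near_triangulationD[OF near]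
  show "SY \<subseteq> V" "distinct CY" "2 \<le> length CY" "set CY \<subseteq> SY"
    using nt(1) union distinct(2) nonempty(3) CY_sub by auto
  show "y \<in> SY" if x: "x \<in> SY - set CY" and xy: "E x y" for x y
  proof -
    have "x \<notin> set C"
      using x set_C set_CY W_side inter by auto
    then have "y \<in> S"
      using nt(5) x xy union by blast
    moreover have "x \<in> SY - {ci, cj}"
      using x set_CY by auto
    ultimately show ?thesis
      using no_cross xy union inter by blast
  qed
  show "ccw_interval SY x a s" if ax: "(a, x) \<in> cyclic_pairs CY" and xs: "(x, s) \<in> cyclic_pairs CY" for a x s
  proof -
    consider "x = ci" | "x = cj" | "x \<notin> {ci, cj}"
      by blast
    then show ?thesis
    proof cases
      case 1
      have "a = cj" "s = hd Y"
        using cyclic_pairs_unique_fst[OF distinct(2) ax] cyclic_pairs_unique_snd[OF distinct(2) xs]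
          pairs_at_ci(4) 1 unfolding cyclic_pairs_CY by auto
      then show ?thesis
        using intervals_at_ci(2) 1 by simp
    next
      case 2
      have "a = last Y" "s = ci"
        using cyclic_pairs_unique_fst[OF distinct(2) ax] cyclic_pairs_unique_snd[OF distinct(2) xs]
          swapped.pairs_at_ci(3) 2 unfolding cyclic_pairs_CY by auto
      then show ?thesis
        using swapped.intervals_at_ci(1) 2 by simp
    next
      case 3
      have xS: "x \<in> SY"
        using cyclic_pairs_in_set[OF ax] CY_sub by auto
      have "ccw_interval S x a s"
        using nt(6) pairs_away_from_chord[OF 3 xS] ax xs by blast
      then show ?thesis
        using nbrs_in_side[of x] 3 xS by (simp add: ccw_interval_def)
    qed
  qed
qed

end

text \<open>The labelling of (S1, C1), which contains C!0 C!1, and that of (S2, C2) glued along the edge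
  C2!0 C2!1.  At an end x of this edge other than C!0, C!1 the neighbours of x in S are P, c, Q in
  counterclockwise order, where c is the other end of the edge; the side lying in S2 consists of
  edges leaving x towards green (x = C2!1) or blue (x = C2!0).\<close>

locale labelling_glue = plane_triangulation +
  fixes S C S1 C1 S2 C2 R1 green1 t1 R2 green2 t2
  assumes near1: "near_triangulation S1 C1" and near2: "near_triangulation S2 C2"
    and lab1: "schnyder_labelling S1 C1 R1 green1 t1" and lab2: "schnyder_labelling S2 C2 R2 green2 t2"
    and union: "S1 \<union> S2 = S" and inter: "S1 \<inter> S2 = {C2 ! 0, C2 ! 1}"
    and no_cross: "\<forall>p\<in>S1 - {C2 ! 0, C2 ! 1}. \<forall>q\<in>S2 - {C2 ! 0, C2 ! 1}. \<not> E p q"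
    and C1_start: "C1 ! 0 = C ! 0" "C1 ! 1 = C ! 1"
    and set_C: "set C = set C1 \<union> set C2"
    and v1_side: "C ! 0 \<notin> S2 \<or> C ! 0 = C2 ! 0" and v2_side: "C ! 1 \<notin> S2 \<or> C ! 1 = C2 ! 1"
    and pairs1: "\<And>x a. x \<in> S1 - {C2 ! 0, C2 ! 1} \<Longrightarrow>
       ((a, x) \<in> cyclic_pairs C \<longleftrightarrow> (a, x) \<in> cyclic_pairs C1) \<and> ((x, a) \<in> cyclic_pairs C \<longleftrightarrow> (x, a) \<in> cyclic_pairs C1)"
    and pairs2: "\<And>x a. x \<in> S2 - {C2 ! 0, C2 ! 1} \<Longrightarrow>
       ((a, x) \<in> cyclic_pairs C \<longleftrightarrow> (a, x) \<in> cyclic_pairs C2) \<and> ((x, a) \<in> cyclic_pairs C \<longleftrightarrow> (x, a) \<in> cyclic_pairs C2)"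
    and chord_ends: "\<And>x a s. x \<in> {C2 ! 0, C2 ! 1} - {C ! 0, C ! 1} \<Longrightarrow>
       (a, x) \<in> cyclic_pairs C \<Longrightarrow> (x, s) \<in> cyclic_pairs C \<Longrightarrow>
       \<exists>P c Q zs. ccw x a = P @ c # Q @ zs \<and> P \<noteq> [] \<and> Q \<noteq> [] \<and> last Q = s \<and> set (P @ c # Q) = nbrs_in S x \<and>
         ((x = C2 ! 1 \<and> (a, x) \<in> cyclic_pairs C1 \<and> (x, c) \<in> cyclic_pairs C1 \<and> set Q \<subseteq> S2 - {C2 ! 0, C2 ! 1}) \<or>
          (x = C2 ! 0 \<and> (c, x) \<in> cyclic_pairs C1 \<and> (x, s) \<in> cyclic_pairs C1 \<and> set P \<subseteq> S2 - {C2 ! 0, C2 ! 1}))"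
begin

abbreviation "e0 \<equiv> C2 ! 0"
abbreviation "e1 \<equiv> C2 ! 1"
abbreviation "R_glued \<equiv> R1 \<union> R2"

definition green :: "'a \<Rightarrow> 'a \<Rightarrow> bool" where
  "green u w \<longleftrightarrow> (if u \<in> S1 \<and> w \<in> S1 then green1 u w else green2 u w)"

definition potential :: "'a \<Rightarrow> nat" where
  "potential x = (if x \<in> S1 then t1 x else t2 x)"

lemmas L1 = schnyder_labellingD[OF lab1, unfolded C1_start]
lemmas L2 = schnyder_labellingD[OF lab2]

lemma e_distinct: "e0 \<noteq> e1"
  using nth_0_1_distinct near_triangulationD(2,3)[OF near2] by blast

lemma e_in: "e0 \<in> S1" "e1 \<in> S1" "e0 \<in> S2" "e1 \<in> S2"
  using inter by auto

lemma e_on_C2: "e0 \<in> set C2" "e1 \<in> set C2"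
  using nth_0_1_in_set near_triangulationD(3)[OF near2] by blast+

lemma v12_in_S1: "C ! 0 \<in> S1" "C ! 1 \<in> S1"
proof -
  have "C1 ! 0 \<in> S1" "C1 ! 1 \<in> S1"
    using nth_0_1_in_set[of C1] near_triangulationD(3,4)[OF near1] by blast+
  then show "C ! 0 \<in> S1" "C ! 1 \<in> S1"
    unfolding C1_start .
qed

lemma no_cross': "p \<in> S1 - {e0, e1} \<Longrightarrow> q \<in> S2 - {e0, e1} \<Longrightarrow> \<not> E q p"
  using no_cross adj_sym by blast

lemma strong2_avoids_chord:
  assumes "(u, w, 2) \<in> R2"
  shows "u \<notin> {e0, e1} \<and> w \<notin> {e0, e1}"
proof -
  have a: "E u w" "u \<in> S2" "w \<in> S2" "{u, w} \<noteq> {e0, e1}"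
    using L2(1)[OF assms] by auto
  have "(e0, y, 1) \<in> R2" if "y \<in> S2" "E e0 y" "y \<noteq> e1" for y
    using L2(4)[OF that] by blast
  moreover have "(e1, y, 1) \<in> R2" if "y \<in> S2" "E e1 y" "y \<noteq> e0" for y
    using L2(5)[OF that] by blast
  moreover have "\<not> ((p, q, 1) \<in> R2 \<and> {p, q} = {u, w})" for p q
    using L2(3)[OF assms] by fastforce
  ultimately show ?thesis
    using a adj_sym[OF a(1)] by (auto simp: doubleton_eq_iff)
qed

lemma glued_wellformed:
  assumes "(u, w, k) \<in> R_glued"
  shows "E u w \<and> u \<in> S \<and> w \<in> S \<and> {u, w} \<noteq> {C ! 0, C ! 1} \<and> (k = 1 \<or> k = 2)"
proof (cases "(u, w, k) \<in> R1")
  case True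
  then show ?thesis
    using L1(1)[OF True] union by auto
next
  case False
  then have r2: "(u, w, k) \<in> R2"
    using assms by blast
  then have a: "E u w" "u \<in> S2" "w \<in> S2" "{u, w} \<noteq> {e0, e1}" "k = 1 \<or> k = 2"
    using L2(1) by auto
  have "{u, w} \<noteq> {C ! 0, C ! 1}"
  proof
    assume h: "{u, w} = {C ! 0, C ! 1}"
    then have "C ! 0 \<in> S2" "C ! 1 \<in> S2"
      using a(2,3) by auto
    then show False
      using h a(4) v1_side v2_side by auto
  qed
  then show ?thesis
    using a union by auto
qed

lemma glued_complete:
  assumes uw: "E u w" "u \<in> S" "w \<in> S" "{u, w} \<noteq> {C ! 0, C ! 1}"
  shows "\<exists>k. (u, w, k) \<in> R_glued \<or> (w, u, k) \<in> R_glued"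
proof (cases "u \<in> S1 \<and> w \<in> S1")
  case True
  then show ?thesis
    using L1(2)[OF uw(1) _ _ uw(4)] by blast
next
  case False
  have "u \<in> S2" "w \<in> S2" "u \<notin> {e0, e1} \<or> w \<notin> {e0, e1}"
  proof -
    consider "u \<in> S2 - {e0, e1}" | "w \<in> S2 - {e0, e1}"
      using False uw(2,3) union e_in by blast
    then show "u \<notin> {e0, e1} \<or> w \<notin> {e0, e1}"
      by cases auto
    show "u \<in> S2"
    proof (rule ccontr)
      assume "u \<notin> S2"
      then have "u \<in> S1 - {e0, e1}" "w \<in> S2 - {e0, e1}"
        using False uw(2,3) union e_in by auto
      then show False
        using no_cross uw(1) by blast
    qed
    show "w \<in> S2"
    proof (rule ccontr)
      assume "w \<notin> S2"
      then have "w \<in> S1 - {e0, e1}" "u \<in> S2 - {e0, e1}"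
        using False uw(2,3) union e_in by auto
      then show False
        using no_cross' uw(1) by blast
    qed
  qed
  then have "{u, w} \<noteq> {e0, e1}"
    by auto
  then show ?thesis
    using L2(2)[OF uw(1) \<open>u \<in> S2\<close> \<open>w \<in> S2\<close>] by blast
qed

lemma glued_unique:
  assumes "(u, w, k) \<in> R_glued" "(u', w', k') \<in> R_glued" "{u, w} = {u', w'}"
  shows "u = u' \<and> w = w' \<and> k = k'"
proof -
  have mixed: False if "(p, q, j) \<in> R1" "(p', q', j') \<in> R2" "{p, q} = {p', q'}" for p q j p' q' j'
  proof -
    have "p \<in> S1" "q \<in> S1"
      using L1(1)[OF that(1)] by auto
    moreover have b: "p' \<in> S2" "q' \<in> S2" "{p', q'} \<noteq> {e0, e1}" "E p' q'"
      using L2(1)[OF that(2)] by auto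
    ultimately have "p' \<in> {e0, e1}" "q' \<in> {e0, e1}"
      using that(3) inter by (auto simp: doubleton_eq_iff)
    moreover have "p' \<noteq> q'"
      using adj_neq[OF b(4)] .
    ultimately show False
      using b(3) by auto
  qed
  show ?thesis
  proof (cases "(u, w, k) \<in> R1")
    case True
    have "(u', w', k') \<in> R1"
    proof (rule ccontr)
      assume "(u', w', k') \<notin> R1"
      then have "(u', w', k') \<in> R2"
        using assms(2) by blast
      then show False
        using mixed[OF True _ assms(3)] by blast
    qed
    then show ?thesis
      using L1(3)[OF True _ assms(3)] by blast
  next
    case False
    then have r2: "(u, w, k) \<in> R2"
      using assms(1) by blast
    have "(u', w', k') \<in> R2"
    proof (rule ccontr)
      assume "(u', w', k') \<notin> R2"
      then have "(u', w', k') \<in> R1"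
        using assms(2) by blast
      then show False
        using mixed[OF _ r2 assms(3)[symmetric]] by blast
    qed
    then show ?thesis
      using L2(3)[OF r2 _ assms(3)] by blast
  qed
qed

lemma glued_at_v1:
  assumes w: "w \<in> S" "E (C ! 0) w" "w \<noteq> C ! 1"
  shows "(C ! 0, w, 1) \<in> R_glued \<and> \<not> green (C ! 0) w"
proof (cases "w \<in> S1")
  case True
  then show ?thesis
    using L1(4)[OF True w(2,3)] v12_in_S1 by (auto simp: green_def)
next
  case False
  then have w2: "w \<in> S2 - {e0, e1}"
    using w(1) union e_in by auto
  have "C ! 0 \<in> S2"
  proof (rule ccontr)
    assume "C ! 0 \<notin> S2"
    then have "C ! 0 \<in> S1 - {e0, e1}"
      using v12_in_S1 e_in by auto
    then show False
      using no_cross w2 w(2) by blast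
  qed
  then have "C ! 0 = e0"
    using v1_side by blast
  then show ?thesis
    using L2(4)[of w] w2 w(2) False by (auto simp: green_def)
qed

lemma glued_at_v2:
  assumes w: "w \<in> S" "E (C ! 1) w" "w \<noteq> C ! 0"
  shows "(C ! 1, w, 1) \<in> R_glued \<and> green (C ! 1) w"
proof (cases "w \<in> S1")
  case True
  then show ?thesis
    using L1(5)[OF True w(2,3)] v12_in_S1 by (auto simp: green_def)
next
  case False
  then have w2: "w \<in> S2 - {e0, e1}"
    using w(1) union e_in by auto
  have "C ! 1 \<in> S2"
  proof (rule ccontr)
    assume "C ! 1 \<notin> S2"
    then have "C ! 1 \<in> S1 - {e0, e1}"
      using v12_in_S1 e_in by auto
    then show False
      using no_cross w2 w(2) by blast
  qed
  then have "C ! 1 = e1"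
    using v2_side by blast
  then show ?thesis
    using L2(5)[of w] w2 w(2) False by (auto simp: green_def)
qed

lemma glued_potential:
  assumes "(u, w, 2) \<in> R_glued"
  shows "potential u < potential w"
proof (cases "(u, w, 2) \<in> R1")
  case True
  then show ?thesis
    using L1(1)[OF True] L1(6)[OF True] by (auto simp: potential_def)
next
  case False
  then have r2: "(u, w, 2) \<in> R2"
    using assms by blast
  then have "u \<notin> S1" "w \<notin> S1"
    using strong2_avoids_chord[OF r2] L2(1)[OF r2] inter by auto
  then show ?thesis
    using L2(6)[OF r2] by (auto simp: potential_def)
qed

lemma R1_edges: "\<forall>u w k. (u, w, k) \<in> R1 \<longrightarrow> E u w"
  and R2_edges: "\<forall>u w k. (u, w, k) \<in> R2 \<longrightarrow> E u w"
  using L1(1) L2(1) by blast+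

lemma glued_vertex:
  assumes x: "x \<in> S - {C ! 0, C ! 1}" "x \<notin> set C"
  shows "schnyder_vertex R_glued green x"
proof (cases "x \<in> S1")
  case True
  have "x \<notin> set C1" "x \<notin> {e0, e1}"
    using x set_C e_on_C2 by auto
  then have "schnyder_vertex R1 green1 x"
    using L1(7) x True by auto
  moreover have "\<forall>y. E x y \<longrightarrow> green x y = green1 x y \<and> green y x = green1 y x"
    using near_triangulationD(5)[OF near1] True \<open>x \<notin> set C1\<close> by (auto simp: green_def)
  ultimately show ?thesis
    using schnyder_vertex_mono[OF _ _ _ R1_edges] by blast
next
  case False
  then have "x \<in> S2" "x \<notin> set C2" "x \<notin> {e0, e1}"
    using x union set_C e_in by auto
  then have "schnyder_vertex R2 green2 x"
    using L2(7) by blast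
  moreover have "\<forall>y. E x y \<longrightarrow> green x y = green2 x y \<and> green y x = green2 y x"
    using False by (auto simp: green_def)
  ultimately show ?thesis
    using schnyder_vertex_mono[OF _ _ _ R2_edges] by blast
qed

lemma green_in_S1: "x \<in> S1 \<Longrightarrow> y \<in> S1 \<Longrightarrow> green x y = green1 x y \<and> green y x = green1 y x"
  by (simp add: green_def)

lemma green_off_S1: "x \<notin> S1 \<Longrightarrow> green x y = green2 x y \<and> green y x = green2 y x"
  by (simp add: green_def)

lemma glued_segment_S1:
  assumes x: "x \<in> S1 - {C ! 0, C ! 1}" and seg: "schnyder_segment S1 R1 green1 x a s"
  shows "schnyder_segment S1 R_glued green x a s"
  using schnyder_segment_mono[OF seg _ refl] green_in_S1 x by (auto simp: nbrs_in_def)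

lemma glued_segment:
  assumes x: "x \<in> S - {C ! 0, C ! 1}" and ax: "(a, x) \<in> cyclic_pairs C" and xs: "(x, s) \<in> cyclic_pairs C"
  shows "schnyder_segment S R_glued green x a s"
proof -
  consider "x \<in> S1 - {e0, e1}" | "x \<in> S2 - {e0, e1}" | "x \<in> {e0, e1}"
    using x union by blast
  then show ?thesis
  proof cases
    case 1
    then have "schnyder_segment S1 R1 green1 x a s"
      using L1(8) pairs1[OF 1] x ax xs by blast
    moreover have "nbrs_in S1 x = nbrs_in S x"
      using 1 no_cross union inter unfolding nbrs_in_def by blast
    ultimately show ?thesis
      using schnyder_segment_mono[of S1 R1 green1 x a s R_glued S green] green_in_S1 1
      by (auto simp: nbrs_in_def)
  next
    case 2
    then have "schnyder_segment S2 R2 green2 x a s"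
      using L2(8) pairs2[OF 2] ax xs by blast
    moreover have "nbrs_in S2 x = nbrs_in S x"
      using 2 no_cross' union inter unfolding nbrs_in_def by blast
    moreover have "x \<notin> S1"
      using 2 inter by blast
    ultimately show ?thesis
      using schnyder_segment_mono[of S2 R2 green2 x a s R_glued S green] green_off_S1 by auto
  next
    case 3
    then obtain P c Q zs where D: "ccw x a = P @ c # Q @ zs" "P \<noteq> []" "Q \<noteq> []" "last Q = s"
      "set (P @ c # Q) = nbrs_in S x"
      "(x = e1 \<and> (a, x) \<in> cyclic_pairs C1 \<and> (x, c) \<in> cyclic_pairs C1 \<and> set Q \<subseteq> S2 - {e0, e1}) \<or>
       (x = e0 \<and> (c, x) \<in> cyclic_pairs C1 \<and> (x, s) \<in> cyclic_pairs C1 \<and> set P \<subseteq> S2 - {e0, e1})"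
      using chord_ends[of x a s] x ax xs by blast
    have xS1: "x \<in> S1 - {C ! 0, C ! 1}"
      using 3 e_in x by auto
    have adj: "E x y" if "y \<in> set (P @ c # Q)" for y
      using that D(5) by (auto simp: nbrs_in_def)
    from D(6) show ?thesis
    proof
      assume h: "x = e1 \<and> (a, x) \<in> cyclic_pairs C1 \<and> (x, c) \<in> cyclic_pairs C1 \<and> set Q \<subseteq> S2 - {e0, e1}"
      have "schnyder_segment S1 R_glued green x a c"
        using glued_segment_S1[OF xS1] L1(8)[OF xS1] h by blast
      moreover have "\<forall>y\<in>set Q. (x, y, 1) \<in> R_glued \<and> green x y"
      proof
        fix y assume y: "y \<in> set Q"
        then have "y \<in> S2 - {e0, e1}" "E x y"
          using h adj by auto
        then show "(x, y, 1) \<in> R_glued \<and> green x y"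
          using L2(5)[of y] h inter by (auto simp: green_def)
      qed
      ultimately show ?thesis
        using schnyder_segment_extend_green[OF _ D(1) D(5) D(3) D(4)] by blast
    next
      assume h: "x = e0 \<and> (c, x) \<in> cyclic_pairs C1 \<and> (x, s) \<in> cyclic_pairs C1 \<and> set P \<subseteq> S2 - {e0, e1}"
      have "schnyder_segment S1 R_glued green x c s"
        using glued_segment_S1[OF xS1] L1(8)[OF xS1] h by blast
      moreover have "\<forall>y\<in>set P. (x, y, 1) \<in> R_glued \<and> \<not> green x y"
      proof
        fix y assume y: "y \<in> set P"
        then have "y \<in> S2 - {e0, e1}" "E x y"
          using h adj by auto
        then show "(x, y, 1) \<in> R_glued \<and> \<not> green x y"
          using L2(4)[of y] h inter e_distinct by (auto simp: green_def)
      qed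
      moreover have "E x a"
        using adj hd_ccw[of x a] D(1,2) by (cases P) auto
      moreover have "last (c # Q) = s"
        using D(3,4) by simp
      ultimately show ?thesis
        using schnyder_segment_extend_blue[OF _ D(1) D(5)] by blast
    qed
  qed
qed

lemma glued_labelling: "schnyder_labelling S C R_glued green potential"
  by (rule schnyder_labellingI[OF glued_wellformed glued_complete glued_unique glued_at_v1 glued_at_v2
        glued_potential glued_vertex glued_segment])

end

context chord_split
begin

lemma chord_glue:
  assumes CY: "CY ! 0 = cj" "CY ! 1 = ci" and CW: "CW ! 0 = C ! 0" "CW ! 1 = C ! 1"
    and sides: "C ! 0 \<notin> SY \<or> C ! 0 = cj" "C ! 1 \<notin> SY \<or> C ! 1 = ci"
    and lab1: "schnyder_labelling SW CW R1 green1 t1" and lab2: "schnyder_labelling SY CY R2 green2 t2"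
  shows "\<exists>green t. schnyder_labelling S C (R1 \<union> R2) green t"
proof -
  interpret swapped: chord_split V E rot S C cj ci W Y SW SY CW CY
    by (rule swap)
  interpret labelling_glue V E rot S C SW CW SY CY R1 green1 t1 R2 green2 t2
  proof unfold_locales
    show "near_triangulation SW CW" "near_triangulation SY CY"
      by (fact swapped.near_triangulation_side near_triangulation_side)+
    show "schnyder_labelling SW CW R1 green1 t1" "schnyder_labelling SY CY R2 green2 t2"
      by (fact lab1 lab2)+
    show "SW \<union> SY = S" "SW \<inter> SY = {CY ! 0, CY ! 1}"
      using union inter CY by auto
    show "\<forall>p\<in>SW - {CY ! 0, CY ! 1}. \<forall>q\<in>SY - {CY ! 0, CY ! 1}. \<not> E p q"
      using swapped.no_cross CY by simp
    show "CW ! 0 = C ! 0" "CW ! 1 = C ! 1"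
      by (fact CW)+
    show "set C = set CW \<union> set CY"
      using set_C set_CY set_CW by auto
    show "C ! 0 \<notin> SY \<or> C ! 0 = CY ! 0" "C ! 1 \<notin> SY \<or> C ! 1 = CY ! 1"
      using sides CY by simp_all
    show "((a, x) \<in> cyclic_pairs C \<longleftrightarrow> (a, x) \<in> cyclic_pairs CW) \<and> ((x, a) \<in> cyclic_pairs C \<longleftrightarrow> (x, a) \<in> cyclic_pairs CW)"
      if "x \<in> SW - {CY ! 0, CY ! 1}" for x a
      using swapped.pairs_away_from_chord[of x a] that CY by auto
    show "((a, x) \<in> cyclic_pairs C \<longleftrightarrow> (a, x) \<in> cyclic_pairs CY) \<and> ((x, a) \<in> cyclic_pairs C \<longleftrightarrow> (x, a) \<in> cyclic_pairs CY)"
      if "x \<in> SY - {CY ! 0, CY ! 1}" for x a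
      using pairs_away_from_chord[of x a] that CY by auto
    show "\<exists>P c Q zs. ccw x a = P @ c # Q @ zs \<and> P \<noteq> [] \<and> Q \<noteq> [] \<and> last Q = s \<and> set (P @ c # Q) = nbrs_in S x \<and>
         ((x = CY ! 1 \<and> (a, x) \<in> cyclic_pairs CW \<and> (x, c) \<in> cyclic_pairs CW \<and> set Q \<subseteq> SY - {CY ! 0, CY ! 1}) \<or>
          (x = CY ! 0 \<and> (c, x) \<in> cyclic_pairs CW \<and> (x, s) \<in> cyclic_pairs CW \<and> set P \<subseteq> SY - {CY ! 0, CY ! 1}))"
      if x: "x \<in> {CY ! 0, CY ! 1} - {C ! 0, C ! 1}" and ax: "(a, x) \<in> cyclic_pairs C"
        and xs: "(x, s) \<in> cyclic_pairs C" for x a s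
    proof (cases "x = ci")
      case True
      obtain P Q zs where "ccw ci a = P @ cj # Q @ zs" "P \<noteq> []" "Q \<noteq> []" "set Q \<subseteq> SY - {ci, cj}"
        "last Q = s" "set (P @ cj # Q) = nbrs_in S ci" "(a, ci) \<in> cyclic_pairs CW"
        using chord_end_split[of a s] ax xs True by blast
      then show ?thesis
        using True chord_pairs CY by (intro exI[of _ P] exI[of _ cj] exI[of _ Q] exI[of _ zs]) auto
    next
      case False
      then have xj: "x = cj"
        using x CY by auto
      obtain P Q zs where "ccw cj a = P @ ci # Q @ zs" "P \<noteq> []" "Q \<noteq> []" "set P \<subseteq> SY - {cj, ci}"
        "last Q = s" "set (P @ ci # Q) = nbrs_in S cj" "(cj, s) \<in> cyclic_pairs CW"
        using swapped.chord_end_split[of a s] ax xs xj by blast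
      then show ?thesis
        using xj chord_pairs CY by (intro exI[of _ P] exI[of _ ci] exI[of _ Q] exI[of _ zs]) auto
    qed
  qed
  show ?thesis
    using glued_labelling by blast
qed

end

context plane_triangulation
begin

lemma chord_step:
  assumes near: "near_triangulation S C"
    and ij: "Suc i < j" "j < length C" "\<not> (i = 0 \<and> j = length C - 1)" "E (C ! i) (C ! j)"
    and C1: "C1 = (if i = 0 then take (Suc j) C else take (Suc i) C @ drop j C)"
    and C2: "C2 = (if i = 0 then C ! 0 # drop j C else C ! j # take (j - i) (drop i C))"
    and union: "S1 \<union> S2 = S" and inter: "S1 \<inter> S2 = {C ! i, C ! j}"
    and sub: "set C1 \<subseteq> S1" "set C2 \<subseteq> S2"
    and no_cross: "\<forall>x\<in>S1 - {C ! i, C ! j}. \<forall>y\<in>S2 - {C ! i, C ! j}. \<not> E x y"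
  shows "near_triangulation S1 C1 \<and> near_triangulation S2 C2 \<and>
    (\<forall>R1 green1 t1 R2 green2 t2. schnyder_labelling S1 C1 R1 green1 t1 \<longrightarrow> schnyder_labelling S2 C2 R2 green2 t2 \<longrightarrow>
       (\<exists>green t. schnyder_labelling S C (R1 \<union> R2) green t))"
proof -
  define X Y Z ci cj where "X = take i C" and "Y = take (j - Suc i) (drop (Suc i) C)"
    and "Z = drop (Suc j) C" and "ci = C ! i" and "cj = C ! j"
  note L = chord_lists[OF ij(1,2), folded X_def Y_def Z_def ci_def cj_def]
  have dC: "distinct (X @ ci # Y @ cj # Z)"
    using near_triangulationD(2)[OF near] L(1) by simp
  have no_cross': "\<forall>p\<in>S2 - {ci, cj}. \<forall>q\<in>S1 - {ci, cj}. \<not> E p q"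
    using no_cross adj_sym unfolding ci_def cj_def by blast
  have X_side: "set X \<subseteq> S1 - {ci, cj}" if "i \<noteq> 0"
    using sub(1) C1 L(3) dC that by auto
  show ?thesis
  proof (cases "i = 0")
    case True
    then have X: "X = []" and C0: "C ! 0 = ci"
      by (simp_all add: X_def ci_def)
    have C1': "C1 = ci # Y @ [cj]" and C2': "C2 = ci # cj # Z"
      using C1 C2 L(2) True X C0 ij(2) by (simp_all add: Z_def cj_def Cons_nth_drop_Suc)
    have "Z \<noteq> []"
      using ij True by (simp add: Z_def)
    interpret chord_split V E rot S C cj ci Z Y S2 S1 C2 C1
    proof unfold_locales
      show "cyclic_pairs C = consec_pairs (cj # Z @ [ci]) \<union> consec_pairs (ci # Y @ [cj])"
        using cyclic_pairs_chord(1)[of X ci Y cj Z] L(1) X by auto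
      show "cyclic_pairs C2 = consec_pairs (cj # Z @ [ci]) \<union> {(ci, cj)}"
        using cyclic_pairs_chord(2)[of "[]" ci cj Z] C2' by simp
      show "cyclic_pairs C1 = consec_pairs (ci # Y @ [cj]) \<union> {(cj, ci)}"
        using cyclic_pairs_chord(4) C1' by simp
      show "set C = {cj, ci} \<union> set Z \<union> set Y" "set C2 = {cj, ci} \<union> set Z" "set C1 = {cj, ci} \<union> set Y"
        using L(1) X C1' C2' by auto
      show "distinct (cj # ci # Z @ Y)" "distinct C2" "distinct C1"
        using dC X C1' C2' by auto
      show "Z \<noteq> []" "Y \<noteq> []" "2 \<le> length C2" "2 \<le> length C1"
        using \<open>Z \<noteq> []\<close> L(5) C1' C2' by auto
      show "S2 \<union> S1 = S" "S2 \<inter> S1 = {cj, ci}" "set C2 \<subseteq> S2" "set C1 \<subseteq> S1"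
        using union inter sub by (auto simp: ci_def cj_def)
      show "\<forall>p\<in>S2 - {cj, ci}. \<forall>q\<in>S1 - {cj, ci}. \<not> E p q"
        using no_cross' by auto
      show "E cj ci"
        using adj_sym ij(4) by (simp add: ci_def cj_def)
    qed (fact near)
    interpret swapped: chord_split V E rot S C ci cj Y Z S1 S2 C1 C2
      by (rule swap)
    have "C ! 1 = hd Y" "hd Y \<in> set Y"
      using L(1) L(5) X by (cases Y; simp)+
    then have "C ! 1 \<notin> S2"
      using swapped.Y_side inter by (auto simp: ci_def cj_def)
    have "\<exists>green t. schnyder_labelling S C (R1 \<union> R2) green t"
      if "schnyder_labelling S1 C1 R1 green1 t1" "schnyder_labelling S2 C2 R2 green2 t2"
      for R1 green1 t1 R2 green2 t2
    proof (rule chord_glue)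
      show "C1 ! 0 = C ! 0" "C1 ! 1 = C ! 1"
        using C1' C0 \<open>C ! 1 = hd Y\<close> L(5) by (cases Y; simp)+
    qed (use that C2' C0 \<open>C ! 1 \<notin> S2\<close> in auto)
    then show ?thesis
      using near_triangulation_side swapped.near_triangulation_side by blast
  next
    case False
    have C1': "C1 = X @ ci # cj # Z" and C2': "C2 = cj # ci # Y"
      using C1 C2 L(3,4) False by (simp_all add: cj_def)
    interpret chord_split V E rot S C ci cj Y "Z @ X" S2 S1 C2 C1
    proof unfold_locales
      show "cyclic_pairs C = consec_pairs (ci # Y @ [cj]) \<union> consec_pairs (cj # (Z @ X) @ [ci])"
        using cyclic_pairs_chord(1)[of X ci Y cj Z] L(1) by simp
      show "cyclic_pairs C2 = consec_pairs (ci # Y @ [cj]) \<union> {(cj, ci)}"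
        using cyclic_pairs_chord(3) C2' by simp
      show "cyclic_pairs C1 = consec_pairs (cj # (Z @ X) @ [ci]) \<union> {(ci, cj)}"
        using cyclic_pairs_chord(2) C1' by simp
      show "set C = {ci, cj} \<union> set Y \<union> set (Z @ X)" "set C2 = {ci, cj} \<union> set Y"
        "set C1 = {ci, cj} \<union> set (Z @ X)"
        using L(1) C1' C2' by auto
      show "distinct (ci # cj # Y @ Z @ X)" "distinct C2" "distinct C1"
        using dC C1' C2' by auto
      show "Y \<noteq> []" "Z @ X \<noteq> []" "2 \<le> length C2" "2 \<le> length C1"
        using L(5) False C1' C2' ij(2) by (auto simp: X_def)
      show "S2 \<union> S1 = S" "S2 \<inter> S1 = {ci, cj}" "set C2 \<subseteq> S2" "set C1 \<subseteq> S1"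
        using union inter sub by (auto simp: ci_def cj_def)
      show "\<forall>p\<in>S2 - {ci, cj}. \<forall>q\<in>S1 - {ci, cj}. \<not> E p q"
        using no_cross' by auto
      show "E ci cj"
        using ij(4) by (simp add: ci_def cj_def)
    qed (fact near)
    interpret swapped: chord_split V E rot S C cj ci "Z @ X" Y S1 S2 C1 C2
      by (rule swap)
    have X: "X \<noteq> []" "length X = i"
      using False ij by (auto simp: X_def)
    have C1_start: "C1 ! 0 = C ! 0" "C1 ! 1 = C ! 1"
      using C1 False ij by (auto simp: nth_append)
    have "X ! 0 \<in> set X"
      using X False by (simp add: nth_mem)
    moreover have "X ! 0 = C ! 0"
      using X by (simp add: X_def)
    ultimately have "C ! 0 \<in> set X"
      by simp
    then have side0: "C ! 0 \<notin> S2"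
      using X_side[OF False] inter by (auto simp: ci_def cj_def)
    have side1: "C ! 1 \<notin> S2 \<or> C ! 1 = ci"
    proof (cases "i = 1")
      case False
      then have "X ! 1 \<in> set X"
        using X \<open>i \<noteq> 0\<close> by (simp add: nth_mem)
      moreover have "X ! 1 = C ! 1"
        using X \<open>i \<noteq> 0\<close> \<open>i \<noteq> 1\<close> by (simp add: X_def)
      ultimately have "C ! 1 \<in> set X"
        by simp
      then show ?thesis
        using X_side[OF \<open>i \<noteq> 0\<close>] inter by (auto simp: ci_def cj_def)
    qed (simp add: ci_def)
    have "\<exists>green t. schnyder_labelling S C (R1 \<union> R2) green t"
      if "schnyder_labelling S1 C1 R1 green1 t1" "schnyder_labelling S2 C2 R2 green2 t2"
      for R1 green1 t1 R2 green2 t2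
      by (rule chord_glue) (use that C1_start C2' side0 side1 in auto)
    then show ?thesis
      using near_triangulation_side swapped.near_triangulation_side by blast
  qed
qed

end

context plane_triangulation
begin

lemma proc_schnyder_labelling:
  assumes "proc E rot S C R" "near_triangulation S C"
  shows "\<exists>green t. schnyder_labelling S C R green t"
  using assms
proof (induction rule: proc.induct)
  case (split i j C C1 C2 S1 S2 S R1 R2)
  have step: "near_triangulation S1 C1 \<and> near_triangulation S2 C2 \<and>
    (\<forall>R1 green1 t1 R2 green2 t2. schnyder_labelling S1 C1 R1 green1 t1 \<longrightarrow> schnyder_labelling S2 C2 R2 green2 t2 \<longrightarrow>
       (\<exists>green t. schnyder_labelling S C (R1 \<union> R2) green t))"
    by (rule chord_step) (use split in auto)
  then obtain green1 t1 green2 t2 where "schnyder_labelling S1 C1 R1 green1 t1" "schnyder_labelling S2 C2 R2 green2 t2"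
    using split.IH by blast
  then show ?case
    using step by blast
next
  case (orient_stop C S)
  interpret chordless_step V E rot S C
    by unfold_locales (use orient_stop in auto)
  have "schnyder_labelling S_del C_del {} (\<lambda>_ _. False) (\<lambda>_. 0)"
    by (rule schnyder_labelling_empty) (use orient_stop.hyps(3) in simp)
  then show ?case
    using schnyder_labelling_delete by fastforce
next
  case (orient_rec C S R')
  interpret chordless_step V E rot S C
    by unfold_locales (use orient_rec in auto)
  obtain green' t' where "schnyder_labelling S_del C_del R' green' t'"
    using orient_rec.IH near_triangulation_delete cycle_after_delete_eq by auto
  then show ?case
    by (rule schnyder_labelling_delete)
qed

end

locale labelled_triangulation = plane_triangulation +
  fixes v1 v2 v3 R green and t :: "'a \<Rightarrow> nat"
  assumes outer: "outer_face_cw E rot v1 v2 v3"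
    and labelling: "schnyder_labelling V [v1, v2, v3] R green t"
begin

definition interior :: "'a set" where
  "interior = V - {v1, v2, v3}"

definition orientation :: "('a \<times> 'a) set" where
  "orientation = {(u, v). (\<exists>k. (u, v, k) \<in> R) \<and> interior_edge E v1 v2 v3 u v}"

lemma outer_adj: "E v1 v2" "E v2 v3" "E v3 v1" "rot v3 v1 = v2"
  using outer by (auto simp: outer_face_cw_def)

lemma outer_distinct: "v1 \<noteq> v2" "v2 \<noteq> v3" "v1 \<noteq> v3"
  using outer_adj adj_irrefl by auto

lemma outer_in_V: "v1 \<in> V" "v2 \<in> V" "v3 \<in> V"
  using outer_adj adj_in_V by auto

lemmas L = schnyder_labellingD[OF labelling, simplified]

lemma labelled_edge: "(u, w, k) \<in> R \<Longrightarrow> E u w \<and> u \<in> V \<and> w \<in> V \<and> {u, w} \<noteq> {v1, v2} \<and> (k = 1 \<or> k = 2)"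
  using L(1) by simp

lemma labelled_antisym: "(u, w, k) \<in> R \<Longrightarrow> (w, u, k') \<notin> R"
  using L(3)[of u w k w u k'] labelled_edge adj_neq by (auto simp: insert_commute)

lemma labelled_strength_unique: "(u, w, k) \<in> R \<Longrightarrow> (u, w, k') \<in> R \<Longrightarrow> k = k'"
  using L(3)[of u w k u w k'] by simp

lemma interior_adj: "x \<in> interior \<Longrightarrow> E x y \<Longrightarrow> interior_edge E v1 v2 v3 x y \<and> interior_edge E v1 v2 v3 y x"
  using adj_sym by (auto simp: interior_edge_def interior_def)

lemma interior_rotation:
  assumes "x \<in> interior"
  obtains p Bo g Ro b Go where "schnyder_rotation R green x p Bo g Ro b Go"
  using L(7)[of x] assms outer_distinct by (auto simp: interior_def schnyder_vertex_def)

lemma v3_segment: "schnyder_segment V R green v3 v2 v1"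
  using L(8)[of v3 v2 v1] outer_distinct outer_in_V by (simp add: cyclic_pairs_def)

lemma rotation_adj:
  assumes "schnyder_rotation R green x p Bo g Ro b Go"
  shows "E x p" "ccw x p = p # Bo @ g # Ro @ b # Go" "y \<in> set (p # Bo @ g # Ro @ b # Go) \<longleftrightarrow> E x y"
proof -
  show "E x p"
    using assms labelled_edge adj_sym by (auto simp: schnyder_rotation_def)
  show ccw: "ccw x p = p # Bo @ g # Ro @ b # Go"
    using assms by (simp add: schnyder_rotation_def)
  show "y \<in> set (p # Bo @ g # Ro @ b # Go) \<longleftrightarrow> E x y"
    using mem_ccw[OF \<open>E x p\<close>] ccw by simp
qed

lemma rotation_labels:
  assumes "schnyder_rotation R green x p Bo g Ro b Go"
  shows "(p, x, 2) \<in> R" "(g, x, 1) \<in> R" "green g x" "(b, x, 1) \<in> R" "\<not> green b x"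
    "\<And>y. y \<in> set Ro \<Longrightarrow> (x, y, 2) \<in> R"
    "\<And>y. y \<in> set Bo \<Longrightarrow> (x, y, 1) \<in> R \<and> \<not> green x y"
    "\<And>y. y \<in> set Go \<Longrightarrow> (x, y, 1) \<in> R \<and> green x y"
  using assms by (auto simp: schnyder_rotation_def schnyder_labels_def)

lemma rotation_in:
  assumes rot: "schnyder_rotation R green x p Bo g Ro b Go" and r: "(u, x, k) \<in> R"
  shows "(u = p \<and> k = 2) \<or> (u = g \<and> k = 1) \<or> (u = b \<and> k = 1)"
proof -
  note lab = rotation_labels[OF rot]
  have "u \<in> set (p # Bo @ g # Ro @ b # Go)"
    using rotation_adj(3)[OF rot] labelled_edge[OF r] adj_sym by blast
  moreover have "u \<notin> set Bo" "u \<notin> set Ro" "u \<notin> set Go"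
    using lab(6-8) labelled_antisym[OF r] by blast+
  ultimately consider "u = p" | "u = g" | "u = b"
    by auto
  then show ?thesis
    by cases (use lab(1,2,4) labelled_strength_unique[OF r] in auto)
qed

lemma rotation_out:
  assumes rot: "schnyder_rotation R green x p Bo g Ro b Go" and r: "(x, u, k) \<in> R"
  shows "(u \<in> set Ro \<and> k = 2) \<or> (u \<in> set Bo \<and> k = 1) \<or> (u \<in> set Go \<and> k = 1)"
proof -
  note lab = rotation_labels[OF rot]
  have "u \<in> set (p # Bo @ g # Ro @ b # Go)"
    using rotation_adj(3)[OF rot] labelled_edge[OF r] by blast
  moreover have "u \<noteq> p" "u \<noteq> g" "u \<noteq> b"
    using lab(1,2,4) labelled_antisym[OF r] by blast+
  ultimately consider "u \<in> set Ro" | "u \<in> set Bo" | "u \<in> set Go"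
    by auto
  then show ?thesis
    by cases (use lab(6-8) labelled_strength_unique[OF r] in auto)
qed

definition red_tree :: "('a \<times> 'a) set" where
  "red_tree = {(u, w). (u, w, 2) \<in> R \<and> interior_edge E v1 v2 v3 u w}"

definition green_tree :: "('a \<times> 'a) set" where
  "green_tree = {(u, w). (u, w, 1) \<in> R \<and> green u w \<and> interior_edge E v1 v2 v3 u w}"

definition blue_tree :: "('a \<times> 'a) set" where
  "blue_tree = {(u, w). (u, w, 1) \<in> R \<and> \<not> green u w \<and> interior_edge E v1 v2 v3 u w}"

lemmas tree_defs = red_tree_def green_tree_def blue_tree_def

lemma trees_union: "red_tree \<union> green_tree \<union> blue_tree = orientation"
  using labelled_edge by (auto simp: tree_defs orientation_def)

lemma filter_id_swap_pairs:
  "length (filter id [a, b, c, d, e, f]) = length (filter id [b, a, d, c, f, e])"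
  by (cases a; cases b; cases c; cases d; cases e; cases f) auto

lemma trees_partition:
  assumes ie: "interior_edge E v1 v2 v3 u v"
  shows "length (filter id [(u, v) \<in> red_tree, (v, u) \<in> red_tree, (u, v) \<in> green_tree,
    (v, u) \<in> green_tree, (u, v) \<in> blue_tree, (v, u) \<in> blue_tree]) = 1"
proof -
  have one_way: "length (filter id [(x, y) \<in> red_tree, (y, x) \<in> red_tree, (x, y) \<in> green_tree,
      (y, x) \<in> green_tree, (x, y) \<in> blue_tree, (y, x) \<in> blue_tree]) = 1"
    if ie: "interior_edge E v1 v2 v3 x y" and r: "(x, y, k) \<in> R" for x y k
  proof -
    have "(y, x, k') \<notin> R" "(x, y, k') \<in> R \<longleftrightarrow> k' = k" for k'
      using labelled_antisym[OF r] labelled_strength_unique[OF r] r by blast+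
    then have "[(x, y) \<in> red_tree, (y, x) \<in> red_tree, (x, y) \<in> green_tree, (y, x) \<in> green_tree,
        (x, y) \<in> blue_tree, (y, x) \<in> blue_tree] =
        [k = 2, False, k = 1 \<and> green x y, False, k = 1 \<and> \<not> green x y, False]"
      using ie by (auto simp: tree_defs)
    then show ?thesis
      using labelled_edge[OF r] by (cases "green x y") auto
  qed
  have "E u v" "u \<in> V" "v \<in> V" "{u, v} \<noteq> {v1, v2}"
    using ie adj_in_V by (auto simp: interior_edge_def)
  then obtain k where "(u, v, k) \<in> R \<or> (v, u, k) \<in> R"
    using L(2) by blast
  then show ?thesis
  proof
    assume "(v, u, k) \<in> R"
    moreover have "interior_edge E v1 v2 v3 v u"
      using ie adj_sym by (auto simp: interior_edge_def insert_commute)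
    ultimately show ?thesis
      by (subst filter_id_swap_pairs) (rule one_way)
  qed (rule one_way[OF ie])
qed

lemma trees_at_interior:
  assumes x: "x \<in> interior"
  shows "card {u. (u, x) \<in> red_tree} = 1 \<and> card {u. (u, x) \<in> green_tree} = 1 \<and> card {u. (u, x) \<in> blue_tree} = 1 \<and>
    (\<exists>r g b Bs Rs Gs. (r, x) \<in> red_tree \<and> (g, x) \<in> green_tree \<and> (b, x) \<in> blue_tree \<and>
       (\<forall>y \<in> set Bs. (x, y) \<in> blue_tree) \<and> (\<forall>y \<in> set Rs. (x, y) \<in> red_tree) \<and>
       (\<forall>y \<in> set Gs. (x, y) \<in> green_tree) \<and> ccw x r = r # Bs @ g # Rs @ b # Gs)"
proof -
  obtain p Bo g Ro b Go where rot: "schnyder_rotation R green x p Bo g Ro b Go"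
    using interior_rotation[OF x] .
  note lab = rotation_labels[OF rot]
  have ie: "interior_edge E v1 v2 v3 x y \<and> interior_edge E v1 v2 v3 y x" if "y \<in> set (p # Bo @ g # Ro @ b # Go)" for y
    using interior_adj[OF x] rotation_adj(3)[OF rot] that by blast
  have "u = p" if "(u, x) \<in> red_tree" for u
    using rotation_in[OF rot, of u 2] that by (simp add: red_tree_def)
  moreover have "(p, x) \<in> red_tree"
    using lab(1) ie[of p] by (simp add: red_tree_def)
  ultimately have red: "{u. (u, x) \<in> red_tree} = {p}"
    by blast
  have "u = g" if "(u, x) \<in> green_tree" for u
    using rotation_in[OF rot, of u 1] lab(5) that by (auto simp: green_tree_def)
  moreover have "(g, x) \<in> green_tree"
    using lab(2,3) ie[of g] by (simp add: green_tree_def)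
  ultimately have green: "{u. (u, x) \<in> green_tree} = {g}"
    by blast
  have "u = b" if "(u, x) \<in> blue_tree" for u
    using rotation_in[OF rot, of u 1] lab(3) that by (auto simp: blue_tree_def)
  moreover have "(b, x) \<in> blue_tree"
    using lab(4,5) ie[of b] by (simp add: blue_tree_def)
  ultimately have blue: "{u. (u, x) \<in> blue_tree} = {b}"
    by blast
  have "\<forall>y \<in> set Bo. (x, y) \<in> blue_tree" "\<forall>y \<in> set Ro. (x, y) \<in> red_tree" "\<forall>y \<in> set Go. (x, y) \<in> green_tree"
    using lab(6-8) ie by (auto simp: tree_defs)
  then show ?thesis
    unfolding red green blue using rotation_adj(2)[OF rot] \<open>(p, x) \<in> red_tree\<close> \<open>(g, x) \<in> green_tree\<close>
      \<open>(b, x) \<in> blue_tree\<close> by (simp only: is_singleton_altdef[symmetric] is_singletonI) blast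
qed

theorem realizer_exists: "realizer V E rot v1 v2 v3 red_tree green_tree blue_tree"
proof -
  have "\<forall>(u, v) \<in> red_tree \<union> green_tree \<union> blue_tree. interior_edge E v1 v2 v3 u v"
    by (auto simp: tree_defs)
  moreover note trees_partition
  moreover note trees_at_interior[unfolded interior_def]
  ultimately show ?thesis
    unfolding realizer_def by blast
qed

end

text \<open>Any realizer inducing the same orientation: the colour classes are numbered cyclically, so
  that a shift of the colouring by one step is an increment of the index modulo 3.\<close>

locale realizer_comparison = labelled_triangulation +
  fixes Tr Tg Tb
  assumes realizer: "realizer V E rot v1 v2 v3 Tr Tg Tb" and same_orientation: "Tr \<union> Tg \<union> Tb = orientation"
begin

definition colour :: "nat \<Rightarrow> ('a \<times> 'a) set" where
  "colour c = [Tr, Tg, Tb] ! (c mod 3)"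

lemma colour_simps [simp]: "colour 0 = Tr" "colour (Suc 0) = Tg" "colour 1 = Tg" "colour 2 = Tb"
  by (simp_all add: colour_def)

lemma colour_mod: "colour (c mod 3) = colour c"
  by (simp add: colour_def)

lemma colour_cases:
  "colour c = Tr \<and> c mod 3 = 0 \<or> colour c = Tg \<and> c mod 3 = 1 \<or> colour c = Tb \<and> c mod 3 = 2"
proof -
  have "c mod 3 = 0 \<or> c mod 3 = 1 \<or> c mod 3 = 2"
    by linarith
  then show ?thesis
    by (auto simp: colour_def)
qed

lemma colour_in_orientation: "(u, w) \<in> colour c \<Longrightarrow> (u, w) \<in> orientation"
  using colour_cases[of c] same_orientation by auto

lemma orientation_coloured:
  assumes "(u, w) \<in> orientation"
  obtains c where "(u, w) \<in> colour c"
proof -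
  have "(u, w) \<in> Tr \<or> (u, w) \<in> Tg \<or> (u, w) \<in> Tb"
    using assms same_orientation by auto
  then show ?thesis
    using that colour_simps by metis
qed

lemma orientation_antisym: "(u, w) \<in> orientation \<Longrightarrow> (w, u) \<notin> orientation"
  using labelled_antisym by (auto simp: orientation_def)

lemma filter_id_one:
  "length (filter id [a, b, c, d, e, f]) = 1 \<Longrightarrow> \<not> (a \<and> c) \<and> \<not> (a \<and> e) \<and> \<not> (c \<and> e)"
  by (cases a; cases b; cases c; cases d; cases e; cases f) auto

lemma colour_unique:
  assumes "(u, w) \<in> colour c" "(u, w) \<in> colour c'"
  shows "c mod 3 = c' mod 3"
proof -
  have "interior_edge E v1 v2 v3 u w"
    using colour_in_orientation[OF assms(1)] by (simp add: orientation_def)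
  then have "\<not> ((u, w) \<in> Tr \<and> (u, w) \<in> Tg) \<and> \<not> ((u, w) \<in> Tr \<and> (u, w) \<in> Tb) \<and> \<not> ((u, w) \<in> Tg \<and> (u, w) \<in> Tb)"
    using realizer filter_id_one unfolding realizer_def by blast
  then show ?thesis
    using colour_cases[of c] colour_cases[of c'] assms by auto
qed

text \<open>The constructed and the given realizer have the same incoming edges at an interior vertex x,
  so the first incoming edge of the given realizer's rotation is one of p, g, b, and its colours
  around x are those of the Schnyder rotation shifted cyclically by some c.\<close>

lemma rotation_colours:
  assumes x: "x \<in> interior" and rot: "schnyder_rotation R green x p Bo g Ro b Go"
  obtains c where "(p, x) \<in> colour c" "\<forall>y\<in>set Ro. (x, y) \<in> colour c"
    "(g, x) \<in> colour (c + 1)" "\<forall>y\<in>set Go. (x, y) \<in> colour (c + 1)"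
    "(b, x) \<in> colour (c + 2)" "\<forall>y\<in>set Bo. (x, y) \<in> colour (c + 2)"
proof -
  obtain r g' b' Bs Rs Gs where Z: "(r, x) \<in> Tr" "(g', x) \<in> Tg" "(b', x) \<in> Tb"
    "\<forall>y \<in> set Bs. (x, y) \<in> Tb" "\<forall>y \<in> set Rs. (x, y) \<in> Tr" "\<forall>y \<in> set Gs. (x, y) \<in> Tg"
    "ccw x r = r # Bs @ g' # Rs @ b' # Gs"
    using realizer x unfolding realizer_def interior_def by blast
  define incoming where "incoming y \<longleftrightarrow> (y, x) \<in> orientation" for y
  note lab = rotation_labels[OF rot]
  have ie: "interior_edge E v1 v2 v3 y x" if "y \<in> set (p # Bo @ g # Ro @ b # Go)" for y
    using interior_adj[OF x] rotation_adj(3)[OF rot] that by blast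
  have in_pgb: "incoming p" "incoming g" "incoming b"
    using lab(1,2,4) ie unfolding incoming_def orientation_def by auto
  have not_in: "\<not> incoming y" if "(x, y, k) \<in> R" for y k
    using that labelled_antisym unfolding incoming_def orientation_def by blast
  have out_BRG: "\<forall>z\<in>set Bo. \<not> incoming z" "\<forall>z\<in>set Ro. \<not> incoming z" "\<forall>z\<in>set Go. \<not> incoming z"
    using lab(6-8) not_in by blast+
  have out_Z: "\<forall>z\<in>set Bs. \<not> incoming z" "\<forall>z\<in>set Rs. \<not> incoming z" "\<forall>z\<in>set Gs. \<not> incoming z"
    using Z(4-6) same_orientation orientation_antisym unfolding incoming_def by blast+
  have in_Z: "incoming r" "incoming g'" "incoming b'"
    using Z(1-3) same_orientation unfolding incoming_def by blast+
  have "E x r"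
    using in_Z(1) labelled_edge adj_sym unfolding incoming_def orientation_def by blast
  then have "r \<in> set (p # Bo @ g # Ro @ b # Go)"
    using rotation_adj(3)[OF rot] by blast
  then consider "r = p" | "r = g" | "r = b"
    using in_Z(1) out_BRG by auto
  then show ?thesis
  proof cases
    case 1
    then have "Bo @ g # (Ro @ b # Go) = Bs @ g' # (Rs @ b' # Gs)"
      using Z(7) rotation_adj(2)[OF rot] by simp
    then have e1: "Bo = Bs" "g = g'" "Ro @ b # Go = Rs @ b' # Gs"
      using split_at_first_eq[where P = incoming] out_BRG out_Z in_pgb in_Z by blast+
    then have "Ro = Rs" "b = b'" "Go = Gs"
      using split_at_first_eq[where P = incoming, OF e1(3)] out_BRG out_Z in_pgb in_Z by blast+
    then show ?thesis
      using that[of 0] Z 1 e1 by (simp add: colour_def)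
  next
    case 2
    have "ccw x p = (p # Bo) @ g # (Ro @ b # Go)"
      using rotation_adj(2)[OF rot] by simp
    then have "ccw x g = g # (Ro @ b # Go) @ (p # Bo)"
      using ccw_rotate_split[OF rotation_adj(1)[OF rot]] by blast
    then have "Ro @ b # (Go @ p # Bo) = Bs @ g' # (Rs @ b' # Gs)"
      using Z(7) 2 by simp
    then have e1: "Ro = Bs" "b = g'" "Go @ p # Bo = Rs @ b' # Gs"
      using split_at_first_eq[where P = incoming] out_BRG out_Z in_pgb in_Z by blast+
    then have "Go = Rs" "p = b'" "Bo = Gs"
      using split_at_first_eq[where P = incoming, OF e1(3)] out_BRG out_Z in_pgb in_Z by blast+
    then show ?thesis
      using that[of 2] Z 2 e1 by (simp add: colour_def)
  next
    case 3
    have "ccw x p = (p # Bo @ g # Ro) @ b # Go"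
      using rotation_adj(2)[OF rot] by simp
    then have "ccw x b = b # Go @ (p # Bo @ g # Ro)"
      using ccw_rotate_split[OF rotation_adj(1)[OF rot]] by blast
    then have "Go @ p # (Bo @ g # Ro) = Bs @ g' # (Rs @ b' # Gs)"
      using Z(7) 3 by simp
    then have e1: "Go = Bs" "p = g'" "Bo @ g # Ro = Rs @ b' # Gs"
      using split_at_first_eq[where P = incoming] out_BRG out_Z in_pgb in_Z by blast+
    then have "Bo = Rs" "g = b'" "Ro = Gs"
      using split_at_first_eq[where P = incoming, OF e1(3)] out_BRG out_Z in_pgb in_Z by blast+
    then show ?thesis
      using that[of 1] Z 3 e1 by (simp add: colour_def)
  qed
qed

lemma v3_segment_labels:
  obtains Bo g Ro b Go zs where "ccw v3 v2 = (Bo @ g # Ro @ b # Go) @ zs"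
    "set (Bo @ g # Ro @ b # Go) = nbrs_in V v3" "schnyder_labels R green v3 Bo g Ro b Go"
  using v3_segment unfolding schnyder_segment_def by blast

lemma strong_head_interior:
  assumes r: "(u, w, 2) \<in> R"
  shows "w \<in> interior"
proof -
  have a: "E u w" "u \<in> V" "w \<in> V" "{u, w} \<noteq> {v1, v2}"
    using labelled_edge[OF r] by auto
  have "w \<noteq> v1"
  proof
    assume "w = v1"
    then have "(v1, u, 1) \<in> R"
      using L(4)[OF a(2)] adj_sym[OF a(1)] a(4) by (auto simp: insert_commute)
    then show False
      using labelled_antisym[OF r] \<open>w = v1\<close> by blast
  qed
  moreover have "w \<noteq> v2"
  proof
    assume "w = v2"
    then have "(v2, u, 1) \<in> R"
      using L(5)[OF a(2)] adj_sym[OF a(1)] a(4) by (auto simp: insert_commute)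
    then show False
      using labelled_antisym[OF r] \<open>w = v2\<close> by blast
  qed
  moreover have "w \<noteq> v3"
  proof
    assume w3: "w = v3"
    obtain Bo g Ro b Go zs where P: "set (Bo @ g # Ro @ b # Go) = nbrs_in V v3"
      "schnyder_labels R green v3 Bo g Ro b Go"
      using v3_segment_labels by metis
    have "u \<in> set (Bo @ g # Ro @ b # Go)"
      using P(1) a w3 adj_sym[OF a(1)] by (simp add: nbrs_in_def)
    then show False
      using P(2) labelled_antisym[OF r] labelled_strength_unique[OF r] w3
      unfolding schnyder_labels_def by force
  qed
  ultimately show ?thesis
    using a by (simp add: interior_def)
qed

lemma strong_tail:
  assumes r: "(u, w, 2) \<in> R"
  shows "u = v3 \<or> u \<in> interior"
proof -
  have a: "E u w" "u \<in> V" "w \<in> V" "{u, w} \<noteq> {v1, v2}"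
    using labelled_edge[OF r] by auto
  have "u \<noteq> v1"
    using L(4)[OF a(3)] a labelled_strength_unique[OF r] by fastforce
  moreover have "u \<noteq> v2"
    using L(5)[OF a(3)] a labelled_strength_unique[OF r] by (fastforce simp: insert_commute)
  ultimately show ?thesis
    using a by (auto simp: interior_def)
qed

text \<open>Two consecutive red edges v3 x, v3 x' bound the face v3 x x'.  The edge between x and x' is
  the last entry of the rotation of x and the first after v3 in that of x', which pins its colour
  relative to both rotations; hence both rotations are shifted by the same amount.\<close>

lemma red_fan_colour:
  assumes r: "(v3, x, 2) \<in> R" and r': "(v3, x', 2) \<in> R" and x': "x' = rot v3 x"
    and c: "(v3, x) \<in> colour c"
  shows "(v3, x') \<in> colour c"
proof -
  have xI: "x \<in> interior" and xI': "x' \<in> interior"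
    using strong_head_interior r r' by auto
  obtain p Bo g Ro b Go where rot: "schnyder_rotation R green x p Bo g Ro b Go"
    using interior_rotation[OF xI] .
  obtain p' Bo' g' Ro' b' Go' where rot': "schnyder_rotation R green x' p' Bo' g' Ro' b' Go'"
    using interior_rotation[OF xI'] .
  have "p = v3" "p' = v3"
    using rotation_in[OF rot r] rotation_in[OF rot' r'] by auto
  obtain cx where cx: "(p, x) \<in> colour cx" "(g, x) \<in> colour (cx + 1)" "\<forall>y\<in>set Go. (x, y) \<in> colour (cx + 1)"
    "(b, x) \<in> colour (cx + 2)"
    using rotation_colours[OF xI rot] by metis
  obtain cx' where cx': "(p', x') \<in> colour cx'" "(g', x') \<in> colour (cx' + 1)" "(b', x') \<in> colour (cx' + 2)"
    "\<forall>y\<in>set Bo'. (x', y) \<in> colour (cx' + 2)"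
    using rotation_colours[OF xI' rot'] by metis
  have "c mod 3 = cx mod 3"
    using colour_unique[OF c] cx(1) \<open>p = v3\<close> by simp
  have xv: "E x v3" "E v3 x"
    using labelled_edge[OF r] adj_sym by auto
  have tr: "rot x' v3 = x" "rot x x' = v3"
    using rot_face[OF xv(1)] x' by auto
  have "x' \<in> set (ccw x v3)" "rot x (last (ccw x v3)) = v3"
    using adj_rot_across[OF xv(2)] x' mem_ccw[OF xv(1)] rot_last_ccw[OF xv(1)] by auto
  moreover have "last (ccw x v3) \<in> set (ccw x v3)"
    using rotation_adj(2)[OF rot] \<open>p = v3\<close> by simp
  ultimately have "last (ccw x v3) = x'"
    using rot_inj[of x "last (ccw x v3)" x'] mem_ccw[OF xv(1)] tr(2) by auto
  then have last: "x' = last (b # Go)"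
    using rotation_adj(2)[OF rot] \<open>p = v3\<close> by simp
  have "1 < deg E x'"
    using rotation_adj(2)[OF rot'] length_ccw[of x' p'] by (simp del: length_ccw)
  then have "ccw x' v3 ! 1 = x"
    using tr(1) by (simp add: nth_ccw)
  then have first: "x = hd (Bo' @ g' # Ro' @ b' # Go')"
    using rotation_adj(2)[OF rot'] \<open>p' = v3\<close> by (simp add: hd_conv_nth)
  have "cx mod 3 = cx' mod 3"
  proof (cases "Go = []")
    case True
    then have "x' = b"
      using last by simp
    then have "(x', x, 1) \<in> R"
      using rotation_labels(4)[OF rot] by simp
    then have "Bo' \<noteq> []"
      using first rotation_labels(2)[OF rot'] labelled_antisym by (cases Bo') auto
    then have "(x', x) \<in> colour (cx' + 2)"
      using first cx'(4) by (cases Bo') auto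
    then have "(cx + 2) mod 3 = (cx' + 2) mod 3"
      using colour_unique cx(4) \<open>x' = b\<close> by blast
    then show ?thesis
      by presburger
  next
    case False
    then have "x' \<in> set Go"
      using last by simp
    then have "(x, x', 1) \<in> R"
      using rotation_labels(8)[OF rot] by blast
    then have "Bo' = []"
      using first rotation_labels(7)[OF rot', of x] labelled_antisym by (cases Bo') auto
    then have "(x, x') \<in> colour (cx' + 1)"
      using first cx'(2) by simp
    then have "(cx + 1) mod 3 = (cx' + 1) mod 3"
      using colour_unique cx(3) \<open>x' \<in> set Go\<close> by blast
    then show ?thesis
      by presburger
  qed
  then have "colour cx' = colour c"
    using \<open>c mod 3 = cx mod 3\<close> colour_mod by metis
  then show ?thesis
    using cx'(1) \<open>p' = v3\<close> by simp
qed

lemma v3_red_edges_monochromatic: "\<exists>c. \<forall>w. (v3, w, 2) \<in> R \<longrightarrow> (v3, w) \<in> colour c"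
proof -
  obtain Bo g Ro b Go zs where P: "ccw v3 v2 = (Bo @ g # Ro @ b # Go) @ zs"
    "set (Bo @ g # Ro @ b # Go) = nbrs_in V v3" "schnyder_labels R green v3 Bo g Ro b Go"
    by (rule v3_segment_labels)
  have red_out: "\<forall>y\<in>set Ro. (v3, y, 2) \<in> R"
    using P(3) by (simp add: schnyder_labels_def)
  have red_in_Ro: "w \<in> set Ro" if r: "(v3, w, 2) \<in> R" for w
  proof -
    have "w \<in> set (Bo @ g # Ro @ b # Go)"
      using P(2) labelled_edge[OF r] by (simp add: nbrs_in_def)
    then show ?thesis
      using P(3) labelled_antisym[OF r] labelled_strength_unique[OF r]
      unfolding schnyder_labels_def by force
  qed
  show ?thesis
  proof (cases Ro)
    case Nil
    then show ?thesis
      using red_in_Ro by auto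
  next
    case (Cons h Ro')
    then have "(v3, h, 2) \<in> R"
      using red_out by simp
    then have "(v3, h) \<in> orientation"
      using interior_adj[OF strong_head_interior] labelled_edge adj_sym
      unfolding orientation_def by blast
    then obtain c where c: "(v3, h) \<in> colour c"
      by (rule orientation_coloured)
    have v32: "E v3 v2"
      using outer_adj adj_sym by blast
    have "(v3, Ro ! k) \<in> colour c" if "k < length Ro" for k
      using that
    proof (induction k)
      case 0
      then show ?case
        using c Cons by simp
    next
      case (Suc k)
      have "Ro = take k Ro @ Ro ! k # Ro ! Suc k # drop (Suc (Suc k)) Ro"
        using Suc.prems by (metis Cons_nth_drop_Suc Suc_lessD append_take_drop_id)
      then have "ccw v3 v2 = (Bo @ g # take k Ro) @ Ro ! k # Ro ! Suc k # (drop (Suc (Suc k)) Ro @ b # Go @ zs)"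
        using P(1) by (metis append.assoc append_Cons)
      then have "Ro ! Suc k = rot v3 (Ro ! k)"
        using ccw_consecutive[OF v32] by blast
      then show ?case
        using red_fan_colour red_out Suc nth_mem by (metis Suc_lessD)
    qed
    then show ?thesis
      using red_in_Ro by (metis in_set_conv_nth)
  qed
qed

text \<open>Every red edge u w with u interior continues the red edge p u entering u, and both lie in the
  same colour class of the given realizer; induction along the potential t, which strictly increases
  along red edges, reduces everything to the red edges leaving v3.\<close>

lemma red_edges_monochromatic: "\<exists>c. \<forall>u w. (u, w, 2) \<in> R \<longrightarrow> (u, w) \<in> colour c"
proof -
  obtain c where c: "\<forall>w. (v3, w, 2) \<in> R \<longrightarrow> (v3, w) \<in> colour c"
    using v3_red_edges_monochromatic by blast
  have "(u, w) \<in> colour c" if "(u, w, 2) \<in> R" for u w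
    using that
  proof (induction "t w" arbitrary: u w rule: less_induct)
    case less
    show ?case
    proof (cases "u = v3")
      case True
      then show ?thesis
        using c less.prems by blast
    next
      case False
      then have u: "u \<in> interior"
        using strong_tail[OF less.prems] by blast
      obtain p Bo g Ro b Go where rot: "schnyder_rotation R green u p Bo g Ro b Go"
        using interior_rotation[OF u] .
      have "(p, u, 2) \<in> R"
        using rotation_labels(1)[OF rot] .
      moreover have "t u < t w"
        using L(6)[OF less.prems] .
      ultimately have "(p, u) \<in> colour c"
        using less.hyps by blast
      moreover obtain cu where "(p, u) \<in> colour cu" "\<forall>y\<in>set Ro. (u, y) \<in> colour cu"
        using rotation_colours[OF u rot] by metis
      moreover have "w \<in> set Ro"
        using rotation_out[OF rot less.prems] by auto
      ultimately show ?thesis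
        using colour_unique colour_mod by metis
    qed
  qed
  then show ?thesis
    by blast
qed

lemma weak_edge_off_red_colour:
  assumes c: "\<forall>u w. (u, w, 2) \<in> R \<longrightarrow> (u, w) \<in> colour c" and uv: "(u, v, 1) \<in> R"
  shows "(u, v) \<notin> colour c"
proof
  assume uvc: "(u, v) \<in> colour c"
  have "interior_edge E v1 v2 v3 u v"
    using colour_in_orientation[OF uvc] by (simp add: orientation_def)
  then consider "v \<in> interior" | "u \<in> interior"
    using labelled_edge[OF uv] by (auto simp: interior_edge_def interior_def)
  then show False
  proof cases
    case 1
    obtain p Bo g Ro b Go where rot: "schnyder_rotation R green v p Bo g Ro b Go"
      using interior_rotation[OF 1] .
    obtain cv where cv: "(p, v) \<in> colour cv" "(g, v) \<in> colour (cv + 1)" "(b, v) \<in> colour (cv + 2)"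
      using rotation_colours[OF 1 rot] by metis
    have "cv mod 3 = c mod 3"
      using colour_unique[OF cv(1)] c rotation_labels(1)[OF rot] by blast
    moreover have "u = g \<or> u = b"
      using rotation_in[OF rot uv] by auto
    then have "c mod 3 = (cv + 1) mod 3 \<or> c mod 3 = (cv + 2) mod 3"
      using colour_unique[OF uvc] cv(2,3) by blast
    ultimately show False
      by presburger
  next
    case 2
    obtain p Bo g Ro b Go where rot: "schnyder_rotation R green u p Bo g Ro b Go"
      using interior_rotation[OF 2] .
    obtain cu where cu: "(p, u) \<in> colour cu" "\<forall>y\<in>set Go. (u, y) \<in> colour (cu + 1)"
      "\<forall>y\<in>set Bo. (u, y) \<in> colour (cu + 2)"
      using rotation_colours[OF 2 rot] by metis
    have "cu mod 3 = c mod 3"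
      using colour_unique[OF cu(1)] c rotation_labels(1)[OF rot] by blast
    moreover have "v \<in> set Bo \<or> v \<in> set Go"
      using rotation_out[OF rot uv] by auto
    then have "c mod 3 = (cu + 1) mod 3 \<or> c mod 3 = (cu + 2) mod 3"
      using colour_unique[OF uvc] cu(2,3) by blast
    ultimately show False
      by presburger
  qed
qed

theorem red_edges_colour_class: "\<exists>c. {(u, w). (u, w, 2) \<in> R} = colour c"
proof -
  obtain c where c: "\<forall>u w. (u, w, 2) \<in> R \<longrightarrow> (u, w) \<in> colour c"
    using red_edges_monochromatic by blast
  have "(u, w, 2) \<in> R" if uw: "(u, w) \<in> colour c" for u w
  proof -
    obtain k where "(u, w, k) \<in> R"
      using colour_in_orientation[OF uw] by (auto simp: orientation_def)
    then show ?thesis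
      using weak_edge_off_red_colour[OF c] uw labelled_edge by fastforce
  qed
  then show ?thesis
    using c by blast
qed

corollary strong_edges_colour_class:
  "{{u, v} | u v. (u, v, 2) \<in> R} = {{u, v} | u v. (u, v) \<in> Tr} \<or>
   {{u, v} | u v. (u, v, 2) \<in> R} = {{u, v} | u v. (u, v) \<in> Tg} \<or>
   {{u, v} | u v. (u, v, 2) \<in> R} = {{u, v} | u v. (u, v) \<in> Tb}"
proof -
  obtain c where c: "{(u, w). (u, w, 2) \<in> R} = colour c"
    using red_edges_colour_class by blast
  then have "{{u, v} | u v. (u, v, 2) \<in> R} = {{u, v} | u v. (u, v) \<in> colour c}"
    by blast
  then show ?thesis
    using colour_cases[of c] by auto
qed

end

lemma outer_face_rotations:
  assumes "outer_face_cw E rot o1 o2 o3" "(v1, v2, v3) \<in> {(o1, o2, o3), (o2, o3, o1), (o3, o1, o2)}"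
  shows "outer_face_cw E rot v1 v2 v3" "{o1, o2, o3} = {v1, v2, v3}"
  using assms by (auto simp: outer_face_cw_def)

lemma interior_edge_outer_set:
  "{o1, o2, o3} = {v1, v2, v3} \<Longrightarrow> interior_edge E o1 o2 o3 = interior_edge E v1 v2 v3"
  by (intro ext) (simp add: interior_edge_def)

lemma realizer_outer_set:
  assumes "{o1, o2, o3} = {v1, v2, v3}"
  shows "realizer V E rot o1 o2 o3 = realizer V E rot v1 v2 v3"
  unfolding realizer_def[abs_def] interior_edge_outer_set[OF assms] assms ..

theorem proposition4p3:
  fixes V :: "'v set" and E :: "'v \<Rightarrow> 'v \<Rightarrow> bool" and rot :: "'v \<Rightarrow> 'v \<Rightarrow> 'v"
    and o1 o2 o3 v1 v2 v3 :: 'v and R :: "('v \<times> 'v \<times> nat) set"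
  assumes "triangular_graph V E rot"
    and "outer_face_cw E rot o1 o2 o3"
    and "(v1, v2, v3) \<in> {(o1, o2, o3), (o2, o3, o1), (o3, o1, o2)}"
    and "proc E rot V [v1, v2, v3] R"
  shows "let L = {(u, v). (\<exists>k. (u, v, k) \<in> R) \<and> interior_edge E o1 o2 o3 u v};
             Strong = {{u, v} | u v. (u, v, 2) \<in> R};
             und = (\<lambda>T. {{u, v} | u v. (u, v) \<in> T})
         in (\<exists>Tr Tg Tb. realizer V E rot o1 o2 o3 Tr Tg Tb \<and> Tr \<union> Tg \<union> Tb = L) \<and>
            (\<forall>Tr Tg Tb. realizer V E rot o1 o2 o3 Tr Tg Tb \<and> Tr \<union> Tg \<union> Tb = L \<longrightarrow>
               Strong = und Tr \<or> Strong = und Tg \<or> Strong = und Tb)"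
proof -
  interpret plane_triangulation V E rot
    by unfold_locales (fact assms(1))
  note rotated = outer_face_rotations[OF assms(2,3)]
  obtain green t where "schnyder_labelling V [v1, v2, v3] R green t"
    using proc_schnyder_labelling[OF assms(4) near_triangulation_outer_face[OF rotated(1)]] by blast
  then interpret labelled_triangulation V E rot v1 v2 v3 R green t
    using rotated(1) by unfold_locales
  have L: "{(u, v). (\<exists>k. (u, v, k) \<in> R) \<and> interior_edge E o1 o2 o3 u v} = orientation"
    unfolding orientation_def interior_edge_outer_set[OF rotated(2)] ..
  have "realizer V E rot o1 o2 o3 red_tree green_tree blue_tree"
    using realizer_exists unfolding realizer_outer_set[OF rotated(2)] .
  then have ex: "\<exists>Tr Tg Tb. realizer V E rot o1 o2 o3 Tr Tg Tb \<and> Tr \<union> Tg \<union> Tb = orientation"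
    using trees_union by blast
  have strong: "{{u, v} | u v. (u, v, 2) \<in> R} = {{u, v} | u v. (u, v) \<in> Tr} \<or>
      {{u, v} | u v. (u, v, 2) \<in> R} = {{u, v} | u v. (u, v) \<in> Tg} \<or>
      {{u, v} | u v. (u, v, 2) \<in> R} = {{u, v} | u v. (u, v) \<in> Tb}"
    if "realizer V E rot o1 o2 o3 Tr Tg Tb" "Tr \<union> Tg \<union> Tb = orientation" for Tr Tg Tb
  proof -
    have "realizer V E rot v1 v2 v3 Tr Tg Tb"
      using that(1) unfolding realizer_outer_set[OF rotated(2)] .
    then interpret realizer_comparison V E rot v1 v2 v3 R green t Tr Tg Tb
      using that(2) by unfold_locales
    show ?thesis
      by (rule strong_edges_colour_class)
  qed
  show ?thesis
    unfolding Let_def L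
  proof (intro conjI allI impI)
    fix Tr Tg Tb
    assume a: "realizer V E rot o1 o2 o3 Tr Tg Tb \<and> Tr \<union> Tg \<union> Tb = orientation"
    show "{{u, v} | u v. (u, v, 2) \<in> R} = {{u, v} | u v. (u, v) \<in> Tr} \<or>
      {{u, v} | u v. (u, v, 2) \<in> R} = {{u, v} | u v. (u, v) \<in> Tg} \<or>
      {{u, v} | u v. (u, v, 2) \<in> R} = {{u, v} | u v. (u, v) \<in> Tb}"
      by (rule strong[OF conjunct1[OF a] conjunct2[OF a]])
  qed (fact ex)
qed

end
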